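(* Let $G$ be a group and $\mathcal F$ a family of subgroups with $G$ of type $FP_{2,\mathcal F}$. The growth rate (equivalence class under $\preceq$) of $\mathrm{FV}_{G,\mathcal F}$ is independent of the choice of $FP_{2,\mathcal F}$-resolution and of the filling norms used to define it; i.e. it is an invariant of the pair $(G,\mathcal F)$.
   Context: Bredon: $\mathcal O_{\mathcal F}(G)$-modules are contravariant functors from the orbit category (objects $G/K$, $K\in\mathcal F$; morphisms $G$-maps) to abelian groups; for a $G$-set $S$ with isotropy in $\mathcal F$, $\mathbb Z[\cdot,S]:G/K\mapsto\mathbb Z[S^K]$ is free (finitely generated if $S/G$ finite); $\mathbb Z_{G,\mathcal F}=\mathbb Z[\cdot,G/G]$. Type $FP_{2,\mathcal F}$: there is a projective resolution $\cdots\to P_2\to P_1\to P_0\to\mathbb Z_{G,\mathcal F}\to0$ with $P_0,P_1,P_2$ finitely generated (an $FP_{2,\mathcal F}$-resolution). Filling norms: for a free $\mathbb ZG$-module with basis $B$, $\|\cdot\|_1$ is the $\ell_1$-norm for the $\mathbb Z$-basis $\{gb\}$; for a finitely generated $\mathbb ZG$-module $M$ and surjection $\eta:F\to M$ from a finitely generated based free module, $\|m\|_\eta=\min\{\|x\|_1:\eta(x)=m\}$ is a filling norm on $M$. $\mathrm{FV}_{G,\mathcal F}$: evaluating an $FP_{2,\mathcal F}$-resolution at $G/1$ gives an exact sequence of finitely generated $\mathbb ZG$-modules $P_2\xrightarrow{\partial_2}P_1\xrightarrow{\partial_1}P_0\to\mathbb Z\to0$; with filling norms on $P_1,P_2$,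 $\mathrm{FV}_{G,\mathcal F}(k)=\max\{\|\gamma\|_{\partial_2}:\gamma\in\ker\partial_1,\|\gamma\|_{P_1}\le k\}$, $\|\gamma\|_{\partial_2}=\min\{\|\mu\|_{P_2}:\partial_2\mu=\gamma\}$. $f\preceq g$ means $\exists C>0$: $f(n)\le Cg(Cn+C)+Cn+C$ for all $n$; $f,g$ are equivalent if $f\preceq g$ and $g\preceq f$. *)

theory Defs
  imports "HOL-Algebra.Coset" "HOL-Library.Extended_Nat" "HOL-Library.Function_Algebras"
begin

definition family :: "('a, 'z) monoid_scheme \<Rightarrow> 'a set set \<Rightarrow> bool" where
  "family G F \<longleftrightarrow> F \<noteq> {} \<and> (\<forall>H\<in>F. subgroup H G)
     \<and> (\<forall>H\<in>F. \<forall>g\<in>carrier G. (g <#\<^bsub>G\<^esub> H) #>\<^bsub>G\<^esub> inv\<^bsub>G\<^esub> g \<in> F)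
     \<and> (\<forall>H\<in>F. \<forall>K. subgroup K G \<and> K \<subseteq> H \<longrightarrow> K \<in> F)"

definition lcos :: "('a, 'z) monoid_scheme \<Rightarrow> 'a set \<Rightarrow> 'a set set" where
  "lcos G K = (\<lambda>x. x <#\<^bsub>G\<^esub> K) ` carrier G"

text \<open>G-maps G/K \<rightarrow> G/L (morphisms of the orbit category), as extensional functions.\<close>
definition Gmap :: "('a, 'z) monoid_scheme \<Rightarrow> 'a set \<Rightarrow> 'a set \<Rightarrow> ('a set \<Rightarrow> 'a set) \<Rightarrow> bool" where
  "Gmap G K L \<phi> \<longleftrightarrow> \<phi> \<in> lcos G K \<rightarrow>\<^sub>E lcos G L
     \<and> (\<forall>g\<in>carrier G. \<forall>c\<in>lcos G K. \<phi> (g <#\<^bsub>G\<^esub> c) = g <#\<^bsub>G\<^esub> \<phi> c)"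

text \<open>Values at G/K (indexed by K) are additive subgroups of a fixed abelian group type;
  om M phi K L : M(G/L) \<rightarrow> M(G/K) for phi : G/K \<rightarrow> G/L.\<close>
record ('a, 'm) omod =
  oc :: "'a set \<Rightarrow> 'm set"
  om :: "('a set \<Rightarrow> 'a set) \<Rightarrow> 'a set \<Rightarrow> 'a set \<Rightarrow> 'm \<Rightarrow> 'm"

definition is_omod :: "('a, 'z) monoid_scheme \<Rightarrow> 'a set set \<Rightarrow> ('a, 'm::ab_group_add) omod \<Rightarrow> bool" where
  "is_omod G F M \<longleftrightarrow>
     (\<forall>K\<in>F. 0 \<in> oc M K \<and> (\<forall>x\<in>oc M K. \<forall>y\<in>oc M K. x + y \<in> oc M K \<and> - x \<in> oc M K))
   \<and> (\<forall>K\<in>F. \<forall>L\<in>F. \<forall>\<phi>. Gmap G K L \<phi> \<longrightarrow>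
        (\<forall>x\<in>oc M L. om M \<phi> K L x \<in> oc M K)
      \<and> (\<forall>x\<in>oc M L. \<forall>y\<in>oc M L. om M \<phi> K L (x + y) = om M \<phi> K L x + om M \<phi> K L y))
   \<and> (\<forall>K\<in>F. \<forall>x\<in>oc M K. om M (restrict id (lcos G K)) K K x = x)
   \<and> (\<forall>K\<in>F. \<forall>L\<in>F. \<forall>J\<in>F. \<forall>\<phi> \<psi>. Gmap G K L \<phi> \<longrightarrow> Gmap G L J \<psi> \<longrightarrow>
        (\<forall>x\<in>oc M J. om M (restrict (\<psi> \<circ> \<phi>) (lcos G K)) K J x = om M \<phi> K L (om M \<psi> L J x)))"

definition is_hom :: "('a, 'z) monoid_scheme \<Rightarrow> 'a set set \<Rightarrow> ('a, 'm::ab_group_add) omod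
    \<Rightarrow> ('a, 'n::ab_group_add) omod \<Rightarrow> ('a set \<Rightarrow> 'm \<Rightarrow> 'n) \<Rightarrow> bool" where
  "is_hom G F M N f \<longleftrightarrow>
     (\<forall>K\<in>F. (\<forall>x\<in>oc M K. f K x \<in> oc N K)
        \<and> (\<forall>x\<in>oc M K. \<forall>y\<in>oc M K. f K (x + y) = f K x + f K y))
   \<and> (\<forall>K\<in>F. \<forall>L\<in>F. \<forall>\<phi>. Gmap G K L \<phi> \<longrightarrow>
        (\<forall>x\<in>oc M L. f K (om M \<phi> K L x) = om N \<phi> K L (f L x)))"

definition Gset :: "('a, 'z) monoid_scheme \<Rightarrow> ('a \<Rightarrow> 's \<Rightarrow> 's) \<Rightarrow> 's set \<Rightarrow> bool" where
  "Gset G act S \<longleftrightarrow> (\<forall>g\<in>carrier G. \<forall>s\<in>S. act g s \<in> S) \<and> (\<forall>s\<in>S. act \<one>\<^bsub>G\<^esub> s = s)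
     \<and> (\<forall>g\<in>carrier G. \<forall>h\<in>carrier G. \<forall>s\<in>S. act (g \<otimes>\<^bsub>G\<^esub> h) s = act g (act h s))"

definition isotropy_in :: "('a, 'z) monoid_scheme \<Rightarrow> 'a set set \<Rightarrow> ('a \<Rightarrow> 's \<Rightarrow> 's) \<Rightarrow> 's set \<Rightarrow> bool" where
  "isotropy_in G F act S \<longleftrightarrow> (\<forall>s\<in>S. {g\<in>carrier G. act g s = s} \<in> F)"

definition fixpts :: "('a, 'z) monoid_scheme \<Rightarrow> ('a \<Rightarrow> 's \<Rightarrow> 's) \<Rightarrow> 's set \<Rightarrow> 'a set \<Rightarrow> 's set" where
  "fixpts G act S K = {s\<in>S. \<forall>k\<in>K. act k s = s}"

definition free_oc :: "('a, 'z) monoid_scheme \<Rightarrow> ('a \<Rightarrow> 's \<Rightarrow> 's) \<Rightarrow> 's set \<Rightarrow> 'a set \<Rightarrow> ('s \<Rightarrow> int) set" where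
  "free_oc G act S K = {c. finite {s. c s \<noteq> 0} \<and> {s. c s \<noteq> 0} \<subseteq> fixpts G act S K}"

text \<open>For phi : G/K \<rightarrow> G/L with phi(K) = gL, the induced map S^L \<rightarrow> S^K is s \<mapsto> g s,
  extended linearly to Z[S^L] \<rightarrow> Z[S^K].\<close>
definition free_om :: "('a, 'z) monoid_scheme \<Rightarrow> ('a \<Rightarrow> 's \<Rightarrow> 's)
    \<Rightarrow> ('a set \<Rightarrow> 'a set) \<Rightarrow> 'a set \<Rightarrow> 'a set \<Rightarrow> ('s \<Rightarrow> int) \<Rightarrow> ('s \<Rightarrow> int)" where
  "free_om G act \<phi> K L c =
     (let g = (SOME g. g \<in> carrier G \<and> \<phi> K = g <#\<^bsub>G\<^esub> L)
      in (\<lambda>t. \<Sum>s\<in>{s. c s \<noteq> 0 \<and> act g s = t}. c s))"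

definition free_mod :: "('a, 'z) monoid_scheme \<Rightarrow> ('a \<Rightarrow> 's \<Rightarrow> 's) \<Rightarrow> 's set \<Rightarrow> ('a, 's \<Rightarrow> int) omod" where
  "free_mod G act S = \<lparr>oc = free_oc G act S, om = free_om G act\<rparr>"

text \<open>The constant module Z_{G,F} = Z[-, G/G].\<close>
definition Zmod :: "('a, 'z) monoid_scheme \<Rightarrow> ('a, 'a set \<Rightarrow> int) omod" where
  "Zmod G = free_mod G (\<lambda>g c. g <#\<^bsub>G\<^esub> c) {carrier G}"

text \<open>Projective = direct summand (retract) of a free module Z[-,S], S a G-set with isotropy in F.
  The index type of S is big enough to contain the canonical G-set of generators of M.\<close>
definition projective :: "('a, 'z) monoid_scheme \<Rightarrow> 'a set set \<Rightarrow> ('a, 'm::ab_group_add) omod \<Rightarrow> bool" where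
  "projective G F M \<longleftrightarrow> (\<exists>(S :: ('a set \<times> 'a set \<times> 'm) set) act i r.
      Gset G act S \<and> isotropy_in G F act S
    \<and> is_hom G F M (free_mod G act S) i \<and> is_hom G F (free_mod G act S) M r
    \<and> (\<forall>K\<in>F. \<forall>x\<in>oc M K. r K (i K x) = x))"

inductive_set agen :: "'m::ab_group_add set \<Rightarrow> 'm set" for A where
  agen_zero: "0 \<in> agen A"
| agen_add: "a \<in> A \<Longrightarrow> x \<in> agen A \<Longrightarrow> x + a \<in> agen A"
| agen_diff: "a \<in> A \<Longrightarrow> x \<in> agen A \<Longrightarrow> x - a \<in> agen A"

definition fin_gen :: "('a, 'z) monoid_scheme \<Rightarrow> 'a set set \<Rightarrow> ('a, 'm::ab_group_add) omod \<Rightarrow> bool" where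
  "fin_gen G F M \<longleftrightarrow> (\<exists>X. finite X \<and> X \<subseteq> Sigma F (oc M)
     \<and> (\<forall>L\<in>F. oc M L \<subseteq> agen {om M \<phi> L K x | \<phi> K x. (K, x) \<in> X \<and> Gmap G L K \<phi>}))"

definition exact_at :: "'a set set \<Rightarrow> ('a set \<Rightarrow> 'm::ab_group_add set) \<Rightarrow> ('a set \<Rightarrow> 'l \<Rightarrow> 'm)
    \<Rightarrow> ('a set \<Rightarrow> 'l set) \<Rightarrow> ('a set \<Rightarrow> 'm \<Rightarrow> 'n::ab_group_add) \<Rightarrow> bool" where
  "exact_at F Mc f Lc g \<longleftrightarrow> (\<forall>K\<in>F. {x\<in>Mc K. g K x = 0} = f K ` Lc K)"

text \<open>Projective resolution  ... \<rightarrow> P 2 \<rightarrow> P 1 \<rightarrow> P 0 \<rightarrow> Z_{G,F} \<rightarrow> 0, with d n : P (n+1) \<rightarrow> P n.\<close>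
definition proj_res :: "('a, 'z) monoid_scheme \<Rightarrow> 'a set set \<Rightarrow> (nat \<Rightarrow> ('a, 'm::ab_group_add) omod)
    \<Rightarrow> (nat \<Rightarrow> 'a set \<Rightarrow> 'm \<Rightarrow> 'm) \<Rightarrow> ('a set \<Rightarrow> 'm \<Rightarrow> ('a set \<Rightarrow> int)) \<Rightarrow> bool" where
  "proj_res G F P d eps \<longleftrightarrow>
     (\<forall>n. is_omod G F (P n) \<and> projective G F (P n))
   \<and> (\<forall>n. is_hom G F (P (Suc n)) (P n) (d n))
   \<and> is_hom G F (P 0) (Zmod G) eps
   \<and> (\<forall>K\<in>F. eps K ` oc (P 0) K = oc (Zmod G) K)
   \<and> exact_at F (oc (P 0)) (d 0) (oc (P 1)) eps
   \<and> (\<forall>n. exact_at F (oc (P (Suc n))) (d (Suc n)) (oc (P (Suc (Suc n)))) (d n))"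

definition FP2_res :: "('a, 'z) monoid_scheme \<Rightarrow> 'a set set \<Rightarrow> (nat \<Rightarrow> ('a, 'm::ab_group_add) omod)
    \<Rightarrow> (nat \<Rightarrow> 'a set \<Rightarrow> 'm \<Rightarrow> 'm) \<Rightarrow> ('a set \<Rightarrow> 'm \<Rightarrow> ('a set \<Rightarrow> int)) \<Rightarrow> bool" where
  "FP2_res G F P d eps \<longleftrightarrow> proj_res G F P d eps
     \<and> fin_gen G F (P 0) \<and> fin_gen G F (P 1) \<and> fin_gen G F (P 2)"

text \<open>The ZG-module structure on M(G/1): g acts via the G-map G/1 \<rightarrow> G/1, x \<mapsto> x g.\<close>
definition gact :: "('a, 'z) monoid_scheme \<Rightarrow> ('a, 'm) omod \<Rightarrow> 'a \<Rightarrow> 'm \<Rightarrow> 'm" where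
  "gact G M g = om M (restrict (\<lambda>c. c #>\<^bsub>G\<^esub> g) (lcos G {\<one>\<^bsub>G\<^esub>})) {\<one>\<^bsub>G\<^esub>} {\<one>\<^bsub>G\<^esub>}"

text \<open>Based free ZG-module with basis B: finitely supported c : G \<times> B \<rightarrow> Z, c = \<Sum> c(g,b) g b.\<close>
definition freeZG :: "('a, 'z) monoid_scheme \<Rightarrow> 'b set \<Rightarrow> ('a \<times> 'b \<Rightarrow> int) set" where
  "freeZG G B = {c. finite {p. c p \<noteq> 0} \<and> {p. c p \<noteq> 0} \<subseteq> carrier G \<times> B}"

definition freeZG_act :: "('a, 'z) monoid_scheme \<Rightarrow> 'a \<Rightarrow> ('a \<times> 'b \<Rightarrow> int) \<Rightarrow> ('a \<times> 'b \<Rightarrow> int)" where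
  "freeZG_act G h c = (\<lambda>(g, b). if g \<in> carrier G then c (inv\<^bsub>G\<^esub> h \<otimes>\<^bsub>G\<^esub> g, b) else 0)"

definition l1norm :: "('a \<times> 'b \<Rightarrow> int) \<Rightarrow> nat" where
  "l1norm c = (\<Sum>p\<in>{p. c p \<noteq> 0}. nat \<bar>c p\<bar>)"

definition filling_map :: "('a, 'z) monoid_scheme \<Rightarrow> 'b set \<Rightarrow> 'm::ab_group_add set
    \<Rightarrow> ('a \<Rightarrow> 'm \<Rightarrow> 'm) \<Rightarrow> (('a \<times> 'b \<Rightarrow> int) \<Rightarrow> 'm) \<Rightarrow> bool" where
  "filling_map G B A \<alpha> \<eta> \<longleftrightarrow> finite B
     \<and> (\<forall>c\<in>freeZG G B. \<forall>c'\<in>freeZG G B. \<eta> (c + c') = \<eta> c + \<eta> c')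
     \<and> (\<forall>h\<in>carrier G. \<forall>c\<in>freeZG G B. \<eta> (freeZG_act G h c) = \<alpha> h (\<eta> c))
     \<and> \<eta> ` freeZG G B = A"

definition fill_norm :: "('a, 'z) monoid_scheme \<Rightarrow> 'b set \<Rightarrow> (('a \<times> 'b \<Rightarrow> int) \<Rightarrow> 'm) \<Rightarrow> 'm \<Rightarrow> nat" where
  "fill_norm G B \<eta> m = (LEAST n. \<exists>c\<in>freeZG G B. \<eta> c = m \<and> l1norm c = n)"

definition FV :: "('a, 'z) monoid_scheme \<Rightarrow> (nat \<Rightarrow> ('a, 'm::ab_group_add) omod) \<Rightarrow> (nat \<Rightarrow> 'a set \<Rightarrow> 'm \<Rightarrow> 'm)
    \<Rightarrow> 'b set \<Rightarrow> (('a \<times> 'b \<Rightarrow> int) \<Rightarrow> 'm) \<Rightarrow> 'c set \<Rightarrow> (('a \<times> 'c \<Rightarrow> int) \<Rightarrow> 'm) \<Rightarrow> nat \<Rightarrow> enat" where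
  "FV G P d B1 \<eta>1 B2 \<eta>2 k =
     Sup ((\<lambda>\<gamma>. enat (LEAST n. \<exists>\<mu>\<in>oc (P 2) {\<one>\<^bsub>G\<^esub>}. d 1 {\<one>\<^bsub>G\<^esub>} \<mu> = \<gamma> \<and> fill_norm G B2 \<eta>2 \<mu> = n))
          ` {\<gamma>\<in>oc (P 1) {\<one>\<^bsub>G\<^esub>}. d 0 {\<one>\<^bsub>G\<^esub>} \<gamma> = 0 \<and> fill_norm G B1 \<eta>1 \<gamma> \<le> k})"

definition preceq :: "(nat \<Rightarrow> enat) \<Rightarrow> (nat \<Rightarrow> enat) \<Rightarrow> bool" where
  "preceq f g \<longleftrightarrow> (\<exists>C::nat. C > 0 \<and> (\<forall>n. f n \<le> enat C * g (C * n + C) + enat (C * n + C)))"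

definition growth_equiv :: "(nat \<Rightarrow> enat) \<Rightarrow> (nat \<Rightarrow> enat) \<Rightarrow> bool" where
  "growth_equiv f g \<longleftrightarrow> preceq f g \<and> preceq g f"

end

theory Submission
  imports Defs "HOL-Library.Indicator_Function"
begin

text \<open>Projectivity yields chain maps \<open>f : P \<rightarrow> Q\<close> and \<open>g : Q \<rightarrow> P\<close> over the identity of
  \<open>\<int>\<^sub>G\<^sub>,\<^sub>\<F>\<close> in degrees \<open>\<le> 1\<close>, and \<open>g f\<close> is chain homotopic to the identity in degree \<open>0\<close>.
  At \<open>G/1\<close> all maps involved are \<open>\<int>G\<close>-linear, and a \<open>\<int>G\<close>-linear map out of a filling-normed module
  (together with lifts through another \<open>\<int>G\<close>-linear map) is Lipschitz, because it is enough to bound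
  the images of the finitely many basis elements. Given a 1-cycle \<open>\<gamma>\<close> of \<open>P\<close>, fill \<open>f \<gamma>\<close> optimally in
  \<open>Q\<close>, carry the filling back with \<open>g\<close>, and correct the difference \<open>g (f \<gamma>) - \<gamma>\<close>, which is a
  boundary of linearly bounded filling norm. Hence \<open>FV\<^sub>P(n) \<le> C FV\<^sub>Q(C n + C) + C n + C\<close>, and the
  roles of \<open>P\<close> and \<open>Q\<close> are symmetric.\<close>

section \<open>Integer multiples and additive subgroups\<close>

definition nat_scale :: "nat \<Rightarrow> 'm::ab_group_add \<Rightarrow> 'm" where
  "nat_scale n x = (\<Sum>i<n. x)"

definition int_scale :: "int \<Rightarrow> 'm::ab_group_add \<Rightarrow> 'm" where
  "int_scale n x = nat_scale (nat n) x - nat_scale (nat (- n)) x"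

lemma nat_scale_0 [simp]: "nat_scale 0 x = 0"
  and nat_scale_Suc [simp]: "nat_scale (Suc n) x = nat_scale n x + x"
  by (simp_all add: nat_scale_def)

lemma nat_scale_add: "nat_scale (m + n) x = nat_scale m x + nat_scale n x"
  by (induction n) (simp_all add: add.assoc)

lemma int_scale_eq_diff:
  assumes "int p - int q = n"
  shows "int_scale n x = nat_scale p x - nat_scale q x"
proof -
  have "nat n + q = p + nat (- n)"
    using assms by linarith
  then have "nat_scale (nat n) x + nat_scale q x = nat_scale p x + nat_scale (nat (- n)) x"
    by (metis nat_scale_add)
  then show ?thesis
    unfolding int_scale_def by (simp add: algebra_simps)
qed

lemma int_scale_add: "int_scale (m + n) x = int_scale m x + int_scale n x"
proof -
  have "int_scale (m + n) x = nat_scale (nat m + nat n) x - nat_scale (nat (- m) + nat (- n)) x"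
    by (rule int_scale_eq_diff) linarith
  then show ?thesis
    unfolding int_scale_def by (simp add: nat_scale_add algebra_simps)
qed

lemma int_scale_0 [simp]: "int_scale 0 x = 0"
  by (simp add: int_scale_def)

lemma int_scale_sum: "int_scale (sum f T) x = (\<Sum>s\<in>T. int_scale (f s) x)"
  by (induction T rule: infinite_finite_induct) (simp_all add: int_scale_add)

lemma int_scale_fun: "int_scale n (f :: 's \<Rightarrow> int) = (\<lambda>t. n * f t)"
proof -
  have "nat_scale k f = (\<lambda>t. int k * f t)" for k
    by (induction k) (simp_all add: algebra_simps)
  moreover have "int (nat n) - int (nat (- n)) = n"
    by simp
  ultimately show ?thesis
    unfolding int_scale_def fun_eq_iff by (metis minus_apply left_diff_distrib)
qed

definition add_subgroup :: "'m::ab_group_add set \<Rightarrow> bool" where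
  "add_subgroup A \<longleftrightarrow> 0 \<in> A \<and> (\<forall>x\<in>A. \<forall>y\<in>A. x + y \<in> A \<and> - x \<in> A)"

definition additive_on :: "'m::ab_group_add set \<Rightarrow> ('m \<Rightarrow> 'n::ab_group_add) \<Rightarrow> bool" where
  "additive_on A f \<longleftrightarrow> (\<forall>x\<in>A. \<forall>y\<in>A. f (x + y) = f x + f y)"

lemma add_subgroup_diff: "add_subgroup A \<Longrightarrow> x \<in> A \<Longrightarrow> y \<in> A \<Longrightarrow> x - y \<in> A"
  unfolding add_subgroup_def by (metis diff_conv_add_uminus)

lemma add_subgroup_sum: "add_subgroup A \<Longrightarrow> (\<And>s. s \<in> T \<Longrightarrow> g s \<in> A) \<Longrightarrow> sum g T \<in> A"
  by (induction T rule: infinite_finite_induct) (simp_all add: add_subgroup_def)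

lemma add_subgroup_int_scale: "add_subgroup A \<Longrightarrow> x \<in> A \<Longrightarrow> int_scale n x \<in> A"
  unfolding int_scale_def nat_scale_def by (intro add_subgroup_diff add_subgroup_sum)

context
  fixes A :: "'m::ab_group_add set" and f :: "'m \<Rightarrow> 'n::ab_group_add"
  assumes A: "add_subgroup A" and f: "additive_on A f"
begin

lemma additive_on_0: "f 0 = 0"
  using A f unfolding add_subgroup_def additive_on_def by (metis add_cancel_right_right add_0)

lemma additive_on_uminus: "x \<in> A \<Longrightarrow> f (- x) = - f x"
  using A f additive_on_0 unfolding add_subgroup_def additive_on_def
  by (metis add.right_inverse eq_neg_iff_add_eq_0)

lemma additive_on_diff: "x \<in> A \<Longrightarrow> y \<in> A \<Longrightarrow> f (x - y) = f x - f y"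
  using A f additive_on_uminus unfolding add_subgroup_def additive_on_def
  by (metis diff_conv_add_uminus)

lemma additive_on_sum: "(\<And>s. s \<in> T \<Longrightarrow> g s \<in> A) \<Longrightarrow> f (sum g T) = (\<Sum>s\<in>T. f (g s))"
proof (induction T rule: infinite_finite_induct)
  case (insert s T)
  then have "sum g T \<in> A"
    using A add_subgroup_sum by blast
  with insert show ?case
    using f by (simp add: additive_on_def)
qed (simp_all add: additive_on_0)

lemma additive_on_int_scale: "x \<in> A \<Longrightarrow> f (int_scale n x) = int_scale n (f x)"
  using A unfolding int_scale_def nat_scale_def
  by (simp add: additive_on_diff additive_on_sum add_subgroup_sum)

end

section \<open>Filling norms\<close>

lemma l1norm_eq_sum: "finite T \<Longrightarrow> {p. c p \<noteq> 0} \<subseteq> T \<Longrightarrow> l1norm c = (\<Sum>p\<in>T. nat \<bar>c p\<bar>)"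
  unfolding l1norm_def by (rule sum.mono_neutral_left) auto

lemma l1norm_add_le:
  assumes "finite {p. c p \<noteq> 0}" "finite {p. d p \<noteq> 0}"
  shows "l1norm (c + d) \<le> l1norm c + l1norm d"
proof -
  let ?T = "{p. c p \<noteq> 0} \<union> {p. d p \<noteq> 0}"
  have T: "finite ?T"
    using assms by auto
  have "l1norm (c + d) = (\<Sum>p\<in>?T. nat \<bar>(c + d) p\<bar>)"
    by (rule l1norm_eq_sum[OF T]) auto
  also have "\<dots> \<le> (\<Sum>p\<in>?T. nat \<bar>c p\<bar> + nat \<bar>d p\<bar>)"
    by (rule sum_mono) auto
  also have "\<dots> = l1norm c + l1norm d"
    using l1norm_eq_sum[OF T, of c] l1norm_eq_sum[OF T, of d] by (simp add: sum.distrib)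
  finally show ?thesis .
qed

lemma l1norm_uminus [simp]: "l1norm (- c) = l1norm c"
  unfolding l1norm_def by simp

lemma l1norm_eq_0_iff: "finite {p. c p \<noteq> 0} \<Longrightarrow> l1norm c = 0 \<longleftrightarrow> c = 0"
  unfolding l1norm_def by (auto simp: fun_eq_iff)

lemma l1norm_Suc_remove_indicator:
  assumes fin: "finite {p. c p \<noteq> 0}" and c: "l1norm c = Suc n"
  obtains p where "c p \<noteq> 0" "l1norm (c - indicator {p}) = n"
    | p where "c p \<noteq> 0" "l1norm (c + indicator {p}) = n"
proof -
  let ?T = "{p. c p \<noteq> 0}"
  have "?T \<noteq> {}"
    using c l1norm_eq_0_iff[OF fin] by auto
  then obtain p where p: "c p \<noteq> 0"
    by auto
  define c' where "c' = c - (\<lambda>q. if q = p then sgn (c p) else 0)"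
  have pT: "p \<in> ?T"
    using p by simp
  have "{q. c' q \<noteq> 0} \<subseteq> ?T"
    using p by (auto simp: c'_def)
  then have "l1norm c' = nat \<bar>c' p\<bar> + (\<Sum>q\<in>?T - {p}. nat \<bar>c' q\<bar>)"
    using l1norm_eq_sum[OF fin] sum.remove[OF fin pT] by metis
  also have "(\<Sum>q\<in>?T - {p}. nat \<bar>c' q\<bar>) = (\<Sum>q\<in>?T - {p}. nat \<bar>c q\<bar>)"
    by (rule sum.cong) (auto simp: c'_def)
  moreover have "nat \<bar>c' p\<bar> + 1 = nat \<bar>c p\<bar>"
    using p by (auto simp: c'_def sgn_if)
  moreover have "l1norm c = nat \<bar>c p\<bar> + (\<Sum>q\<in>?T - {p}. nat \<bar>c q\<bar>)"
    unfolding l1norm_def using sum.remove[OF fin pT] by simp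
  ultimately have c': "l1norm c' = n"
    using c by linarith
  show ?thesis
  proof (cases "c p > 0")
    case True
    then have "c' = c - indicator {p}"
      by (auto simp: c'_def fun_eq_iff indicator_def)
    with that c' p show ?thesis
      by blast
  next
    case False
    with p have "c' = c + indicator {p}"
      by (auto simp: c'_def fun_eq_iff indicator_def)
    with that c' p show ?thesis
      by blast
  qed
qed

lemma freeZG_add: "c \<in> freeZG G B \<Longrightarrow> d \<in> freeZG G B \<Longrightarrow> c + d \<in> freeZG G B"
proof -
  assume cd: "c \<in> freeZG G B" "d \<in> freeZG G B"
  have "{p. (c + d) p \<noteq> 0} \<subseteq> {p. c p \<noteq> 0} \<union> {p. d p \<noteq> 0}"
    by auto
  with cd show ?thesis
    unfolding freeZG_def by (auto intro: finite_subset)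
qed

lemma freeZG_uminus: "c \<in> freeZG G B \<Longrightarrow> - c \<in> freeZG G B"
  unfolding freeZG_def by auto

lemma freeZG_zero: "0 \<in> freeZG G B"
  unfolding freeZG_def by auto

lemma freeZG_diff: "c \<in> freeZG G B \<Longrightarrow> d \<in> freeZG G B \<Longrightarrow> c - d \<in> freeZG G B"
  by (metis freeZG_add freeZG_uminus diff_conv_add_uminus)

lemma freeZG_indicator: "g \<in> carrier G \<Longrightarrow> b \<in> B \<Longrightarrow> indicator {(g, b)} \<in> freeZG G B"
  unfolding freeZG_def by (auto simp: indicator_def)

context group
begin

lemma freeZG_act_support:
  assumes h: "h \<in> carrier G" and c: "c \<in> freeZG G B"
  shows "{p. freeZG_act G h c p \<noteq> 0} = (\<lambda>(g, b). (h \<otimes> g, b)) ` {p. c p \<noteq> 0}"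
proof (intro Set.set_eqI iffI)
  fix p assume "p \<in> {p. freeZG_act G h c p \<noteq> 0}"
  then obtain g b where p: "p = (g, b)" "g \<in> carrier G" "c (inv h \<otimes> g, b) \<noteq> 0"
    unfolding freeZG_act_def by (cases p) (auto split: if_splits)
  have "g = h \<otimes> (inv h \<otimes> g)"
    using h p by (simp add: m_assoc[symmetric])
  with p show "p \<in> (\<lambda>(g, b). (h \<otimes> g, b)) ` {p. c p \<noteq> 0}"
    by (auto intro!: image_eqI[where x = "(inv h \<otimes> g, b)"])
next
  fix p assume "p \<in> (\<lambda>(g, b). (h \<otimes> g, b)) ` {p. c p \<noteq> 0}"
  then obtain g b where p: "p = (h \<otimes> g, b)" "c (g, b) \<noteq> 0"
    by auto
  then have "g \<in> carrier G"
    using c unfolding freeZG_def by auto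
  moreover have "inv h \<otimes> (h \<otimes> g) = g"
    using h calculation by (simp add: m_assoc[symmetric])
  ultimately show "p \<in> {p. freeZG_act G h c p \<noteq> 0}"
    using h p unfolding freeZG_act_def by auto
qed

lemma freeZG_act_closed:
  assumes h: "h \<in> carrier G" and c: "c \<in> freeZG G B"
  shows "freeZG_act G h c \<in> freeZG G B"
proof -
  have "{p. freeZG_act G h c p \<noteq> 0} \<subseteq> carrier G \<times> B" "finite {p. freeZG_act G h c p \<noteq> 0}"
    using h c unfolding freeZG_act_support[OF h c] by (auto simp: freeZG_def)
  then show ?thesis
    unfolding freeZG_def by blast
qed

lemma l1norm_freeZG_act:
  assumes h: "h \<in> carrier G" and c: "c \<in> freeZG G B"
  shows "l1norm (freeZG_act G h c) = l1norm c"
proof -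
  let ?m = "\<lambda>(g, b). (h \<otimes> g, b)"
  have supp: "{p. c p \<noteq> 0} \<subseteq> carrier G \<times> B"
    using c unfolding freeZG_def by auto
  have inj: "inj_on ?m {p. c p \<noteq> 0}"
  proof (rule inj_onI)
    fix p q assume "p \<in> {p. c p \<noteq> 0}" "q \<in> {p. c p \<noteq> 0}" "?m p = ?m q"
    moreover obtain g b g' b' where "p = (g, b)" "q = (g', b')"
      by fastforce
    ultimately show "p = q"
      using supp h Units_l_cancel[of h g g'] by (auto simp: Units_eq)
  qed
  have "l1norm (freeZG_act G h c) = (\<Sum>p\<in>{p. c p \<noteq> 0}. nat \<bar>freeZG_act G h c (?m p)\<bar>)"
    unfolding l1norm_def freeZG_act_support[OF h c] sum.reindex[OF inj] comp_def
    by (simp add: case_prod_beta)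
  also have "\<dots> = l1norm c"
    unfolding l1norm_def
  proof (intro sum.cong refl)
    fix p assume "p \<in> {p. c p \<noteq> 0}"
    then obtain g b where "p = (g, b)" "g \<in> carrier G"
      using supp by auto
    with h show "nat \<bar>freeZG_act G h c (?m p)\<bar> = nat \<bar>c p\<bar>"
      by (simp add: freeZG_act_def m_assoc[symmetric])
  qed
  finally show ?thesis .
qed

lemma freeZG_act_indicator:
  assumes g: "g \<in> carrier G"
  shows "freeZG_act G g (indicator {(\<one>, b)}) = indicator {(g, b)}"
proof (intro ext, clarify)
  fix g' b'
  show "freeZG_act G g (indicator {(\<one>, b)}) (g', b') = indicator {(g, b)} (g', b')"
  proof (cases "g' \<in> carrier G")
    case True
    then have "inv g \<otimes> g' = \<one> \<longleftrightarrow> g' = g"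
      using g inv_solve_left'[of \<one> g g'] by simp
    with True show ?thesis
      by (simp add: freeZG_act_def indicator_def)
  next
    case False
    with g show ?thesis
      by (auto simp: freeZG_act_def indicator_def)
  qed
qed

end

locale filling_norm = group G for G :: "('a, 'z) monoid_scheme" (structure) +
  fixes B :: "'b set" and A :: "'m::ab_group_add set"
    and \<alpha> :: "'a \<Rightarrow> 'm \<Rightarrow> 'm" and \<eta> :: "('a \<times> 'b \<Rightarrow> int) \<Rightarrow> 'm"
  assumes filling_map: "filling_map G B A \<alpha> \<eta>"
begin

lemma finite_basis: "finite B"
  and eta_add: "c \<in> freeZG G B \<Longrightarrow> c' \<in> freeZG G B \<Longrightarrow> \<eta> (c + c') = \<eta> c + \<eta> c'"
  and eta_act: "h \<in> carrier G \<Longrightarrow> c \<in> freeZG G B \<Longrightarrow> \<eta> (freeZG_act G h c) = \<alpha> h (\<eta> c)"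
  and eta_image: "\<eta> ` freeZG G B = A"
  using filling_map unfolding filling_map_def by auto

lemma eta_in: "c \<in> freeZG G B \<Longrightarrow> \<eta> c \<in> A"
  using eta_image by auto

lemma eta_0: "\<eta> 0 = 0"
  using eta_add[OF freeZG_zero freeZG_zero] by simp

lemma eta_uminus: "c \<in> freeZG G B \<Longrightarrow> \<eta> (- c) = - \<eta> c"
  using eta_add[OF _ freeZG_uminus, of c c] eta_0 by (simp add: eq_neg_iff_add_eq_0 add.commute)

lemma fill_norm_attained:
  assumes "m \<in> A"
  obtains c where "c \<in> freeZG G B" "\<eta> c = m" "l1norm c = fill_norm G B \<eta> m"
proof -
  obtain c0 where c0: "c0 \<in> freeZG G B" "\<eta> c0 = m"
    using assms eta_image by auto
  have "\<exists>c\<in>freeZG G B. \<eta> c = m \<and> l1norm c = fill_norm G B \<eta> m"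
    unfolding fill_norm_def by (rule LeastI_ex) (use c0 in blast)
  with that show ?thesis
    by blast
qed

lemma fill_norm_le: "c \<in> freeZG G B \<Longrightarrow> \<eta> c = m \<Longrightarrow> fill_norm G B \<eta> m \<le> l1norm c"
  unfolding fill_norm_def by (rule Least_le) auto

lemma zero_in: "0 \<in> A"
  and fill_norm_zero [simp]: "fill_norm G B \<eta> 0 = 0"
  using eta_in[OF freeZG_zero] fill_norm_le[OF freeZG_zero eta_0] by (simp_all add: eta_0 l1norm_def)

lemma add_in: "x \<in> A \<Longrightarrow> y \<in> A \<Longrightarrow> x + y \<in> A"
  and fill_norm_add_le:
    "x \<in> A \<Longrightarrow> y \<in> A \<Longrightarrow> fill_norm G B \<eta> (x + y) \<le> fill_norm G B \<eta> x + fill_norm G B \<eta> y"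
proof -
  assume "x \<in> A" "y \<in> A"
  then obtain c d where c: "c \<in> freeZG G B" "\<eta> c = x" "l1norm c = fill_norm G B \<eta> x"
    and d: "d \<in> freeZG G B" "\<eta> d = y" "l1norm d = fill_norm G B \<eta> y"
    by (metis fill_norm_attained)
  then have cd: "c + d \<in> freeZG G B" "\<eta> (c + d) = x + y"
    using eta_add freeZG_add by auto
  then show "x + y \<in> A"
    using eta_in by metis
  have "fill_norm G B \<eta> (x + y) \<le> l1norm (c + d)"
    using fill_norm_le cd by blast
  also have "\<dots> \<le> l1norm c + l1norm d"
    using c d by (intro l1norm_add_le) (auto simp: freeZG_def)
  finally show "fill_norm G B \<eta> (x + y) \<le> fill_norm G B \<eta> x + fill_norm G B \<eta> y"
    using c d by simp
qed

lemma uminus_in: "x \<in> A \<Longrightarrow> - x \<in> A"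
  and fill_norm_uminus_le: "x \<in> A \<Longrightarrow> fill_norm G B \<eta> (- x) \<le> fill_norm G B \<eta> x"
proof -
  assume "x \<in> A"
  then obtain c where c: "c \<in> freeZG G B" "\<eta> c = x" "l1norm c = fill_norm G B \<eta> x"
    by (rule fill_norm_attained)
  then have "- c \<in> freeZG G B" "\<eta> (- c) = - x"
    using eta_uminus freeZG_uminus by auto
  then show "- x \<in> A" "fill_norm G B \<eta> (- x) \<le> fill_norm G B \<eta> x"
    using eta_in fill_norm_le c(3) by (metis l1norm_uminus)+
qed

lemma act_in: "x \<in> A \<Longrightarrow> h \<in> carrier G \<Longrightarrow> \<alpha> h x \<in> A"
  and fill_norm_act_le: "x \<in> A \<Longrightarrow> h \<in> carrier G \<Longrightarrow> fill_norm G B \<eta> (\<alpha> h x) \<le> fill_norm G B \<eta> x"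
proof -
  assume x: "x \<in> A" and h: "h \<in> carrier G"
  then obtain c where c: "c \<in> freeZG G B" "\<eta> c = x" "l1norm c = fill_norm G B \<eta> x"
    by (metis fill_norm_attained)
  then have "freeZG_act G h c \<in> freeZG G B" "\<eta> (freeZG_act G h c) = \<alpha> h x"
    using h eta_act freeZG_act_closed by auto
  then show "\<alpha> h x \<in> A" "fill_norm G B \<eta> (\<alpha> h x) \<le> fill_norm G B \<eta> x"
    using eta_in fill_norm_le c(3) l1norm_freeZG_act[OF h c(1)] by metis+
qed

lemma diff_in: "x \<in> A \<Longrightarrow> y \<in> A \<Longrightarrow> x - y \<in> A"
  and fill_norm_diff_le:
    "x \<in> A \<Longrightarrow> y \<in> A \<Longrightarrow> fill_norm G B \<eta> (x - y) \<le> fill_norm G B \<eta> x + fill_norm G B \<eta> y"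
proof -
  assume x: "x \<in> A" and y: "y \<in> A"
  then show "x - y \<in> A"
    using add_in[OF x uminus_in[OF y]] by (simp only: diff_conv_add_uminus)
  show "fill_norm G B \<eta> (x - y) \<le> fill_norm G B \<eta> x + fill_norm G B \<eta> y"
    using fill_norm_add_le[OF x uminus_in[OF y]] fill_norm_uminus_le[OF y] by (simp only: diff_conv_add_uminus)
qed

lemma add_subgroup: "add_subgroup A"
  unfolding add_subgroup_def using zero_in add_in uminus_in by blast

end

section \<open>Lipschitz lifts along \<open>\<int>G\<close>-maps\<close>

locale lipschitz_lift =
  src: filling_norm G B A1 \<alpha>1 \<eta> + tgt: filling_norm G C A2 \<alpha>2 \<theta>
  for G :: "('a, 'z) monoid_scheme" (structure)
    and B :: "'b set" and A1 :: "'m::ab_group_add set" and \<alpha>1 and \<eta>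
    and C :: "'c set" and A2 :: "'n::ab_group_add set" and \<alpha>2 and \<theta> +
  fixes \<phi> :: "'m \<Rightarrow> 'k::ab_group_add" and \<psi> :: "'n \<Rightarrow> 'k" and \<alpha>3 :: "'a \<Rightarrow> 'k \<Rightarrow> 'k"
  assumes additive_\<phi>: "additive_on A1 \<phi>" and additive_\<psi>: "additive_on A2 \<psi>"
    and equivariant_\<phi>: "\<And>h x. h \<in> carrier G \<Longrightarrow> x \<in> A1 \<Longrightarrow> \<phi> (\<alpha>1 h x) = \<alpha>3 h (\<phi> x)"
    and equivariant_\<psi>: "\<And>h y. h \<in> carrier G \<Longrightarrow> y \<in> A2 \<Longrightarrow> \<psi> (\<alpha>2 h y) = \<alpha>3 h (\<psi> y)"
    and image_subset: "\<phi> ` A1 \<subseteq> \<psi> ` A2"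
begin

definition is_lift :: "'n \<Rightarrow> ('a \<times> 'b \<Rightarrow> int) \<Rightarrow> bool" where
  "is_lift z c \<longleftrightarrow> z \<in> A2 \<and> \<psi> z = \<phi> (\<eta> c)"

lemma is_lift_0: "is_lift 0 0"
  using tgt.zero_in src.eta_0 additive_on_0[OF src.add_subgroup additive_\<phi>]
    additive_on_0[OF tgt.add_subgroup additive_\<psi>]
  unfolding is_lift_def by simp

lemma is_lift_add:
  assumes "c \<in> freeZG G B" "d \<in> freeZG G B" "is_lift z c" "is_lift w d"
  shows "is_lift (z + w) (c + d)"
  using assms src.eta_add src.eta_in tgt.add_in additive_\<phi> additive_\<psi>
  unfolding is_lift_def additive_on_def by auto

lemma is_lift_uminus:
  assumes "c \<in> freeZG G B" "is_lift z c"
  shows "is_lift (- z) (- c)"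
  using assms src.eta_uminus src.eta_in tgt.uminus_in
    additive_on_uminus[OF src.add_subgroup additive_\<phi>] additive_on_uminus[OF tgt.add_subgroup additive_\<psi>]
  unfolding is_lift_def by auto

lemma basis_lifts:
  obtains y K where "\<And>b. b \<in> B \<Longrightarrow> is_lift (y b) (indicator {(\<one>, b)}) \<and> fill_norm G C \<theta> (y b) \<le> K"
proof -
  have "\<forall>b\<in>B. \<exists>z. is_lift z (indicator {(\<one>, b)})"
    using image_subset src.eta_in[OF freeZG_indicator] unfolding is_lift_def by fastforce
  then obtain y where y: "\<And>b. b \<in> B \<Longrightarrow> is_lift (y b) (indicator {(\<one>, b)})"
    by metis
  have bound: "fill_norm G C \<theta> (y b) \<le> (\<Sum>b\<in>B. fill_norm G C \<theta> (y b))" if "b \<in> B" for b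
    using that src.finite_basis by (intro member_le_sum) auto
  show ?thesis
    by (rule that[of y "\<Sum>b\<in>B. fill_norm G C \<theta> (y b)"]) (use y bound in blast)
qed

context
  fixes y K
  assumes basis_lift: "\<And>b. b \<in> B \<Longrightarrow> is_lift (y b) (indicator {(\<one>, b)}) \<and> fill_norm G C \<theta> (y b) \<le> K"
begin

lemma indicator_lift:
  assumes g: "g \<in> carrier G" and b: "b \<in> B"
  shows "is_lift (\<alpha>2 g (y b)) (indicator {(g, b)})" "fill_norm G C \<theta> (\<alpha>2 g (y b)) \<le> K"
proof -
  have yb: "y b \<in> A2" "\<psi> (y b) = \<phi> (\<eta> (indicator {(\<one>, b)}))" "fill_norm G C \<theta> (y b) \<le> K"
    using basis_lift[OF b] unfolding is_lift_def by auto
  have "\<psi> (\<alpha>2 g (y b)) = \<phi> (\<alpha>1 g (\<eta> (indicator {(\<one>, b)})))"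
    using yb g b equivariant_\<phi> equivariant_\<psi> src.eta_in[OF freeZG_indicator] by simp
  also have "\<dots> = \<phi> (\<eta> (freeZG_act G g (indicator {(\<one>, b)})))"
    using src.eta_act[OF g freeZG_indicator[OF src.one_closed b]] by simp
  also have "\<dots> = \<phi> (\<eta> (indicator {(g, b)}))"
    by (simp only: src.freeZG_act_indicator[OF g])
  finally show "is_lift (\<alpha>2 g (y b)) (indicator {(g, b)})"
    unfolding is_lift_def using tgt.act_in yb g by blast
  show "fill_norm G C \<theta> (\<alpha>2 g (y b)) \<le> K"
    using tgt.fill_norm_act_le yb g order_trans by blast
qed

lemma lift_add_indicator:
  assumes c: "c \<in> freeZG G B" and z: "is_lift z c" "fill_norm G C \<theta> z \<le> m"
    and g: "g \<in> carrier G" and b: "b \<in> B"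
  shows "\<exists>w. is_lift w (c + indicator {(g, b)}) \<and> fill_norm G C \<theta> w \<le> m + K"
    and "\<exists>w. is_lift w (c - indicator {(g, b)}) \<and> fill_norm G C \<theta> w \<le> m + K"
proof -
  let ?u = "indicator {(g, b)} :: 'a \<times> 'b \<Rightarrow> int" and ?v = "\<alpha>2 g (y b)"
  have u: "?u \<in> freeZG G B"
    using g b by (rule freeZG_indicator)
  note v = indicator_lift[OF g b]
  have zA: "z \<in> A2" and vA: "?v \<in> A2"
    using z(1) v(1) unfolding is_lift_def by auto
  have "is_lift (z + ?v) (c + ?u)"
    by (rule is_lift_add[OF c u z(1) v(1)])
  moreover have "fill_norm G C \<theta> (z + ?v) \<le> m + K"
    using tgt.fill_norm_add_le[OF zA vA] z(2) v(2) by simp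
  ultimately show "\<exists>w. is_lift w (c + ?u) \<and> fill_norm G C \<theta> w \<le> m + K"
    by blast
  have "is_lift (z + - ?v) (c + - ?u)"
    by (rule is_lift_add[OF c freeZG_uminus[OF u] z(1) is_lift_uminus[OF u v(1)]])
  moreover have "fill_norm G C \<theta> (z + - ?v) \<le> m + K"
    using tgt.fill_norm_add_le[OF zA tgt.uminus_in[OF vA]] tgt.fill_norm_uminus_le[OF vA] z(2) v(2) by simp
  ultimately show "\<exists>w. is_lift w (c - ?u) \<and> fill_norm G C \<theta> w \<le> m + K"
    unfolding diff_conv_add_uminus by blast
qed

lemma lift_l1norm_bound:
  "c \<in> freeZG G B \<Longrightarrow> \<exists>z. is_lift z c \<and> fill_norm G C \<theta> z \<le> K * l1norm c"
proof (induction "l1norm c" arbitrary: c)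
  case 0
  then have "c = 0"
    using l1norm_eq_0_iff[of c] unfolding freeZG_def by simp
  then show ?case
    using is_lift_0 tgt.fill_norm_zero by (metis le0)
next
  case (Suc n)
  have supp: "finite {p. c p \<noteq> 0}" "{p. c p \<noteq> 0} \<subseteq> carrier G \<times> B"
    using Suc.prems unfolding freeZG_def by auto
  have K: "K * l1norm c = K * n + K"
    using Suc.hyps(2)[symmetric] by simp
  show ?case
    using supp(1) Suc.hyps(2)[symmetric]
  proof (cases rule: l1norm_Suc_remove_indicator)
    case (1 p)
    then obtain g b where p: "p = (g, b)" "g \<in> carrier G" "b \<in> B"
      using supp by auto
    then have c': "c - indicator {p} \<in> freeZG G B"
      using freeZG_diff[OF Suc.prems freeZG_indicator[OF p(2,3)]] by simp
    obtain z where "is_lift z (c - indicator {p})" "fill_norm G C \<theta> z \<le> K * n"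
      using Suc.hyps(1)[OF _ c'] 1 by auto
    from lift_add_indicator(1)[OF c' this p(2,3), folded p(1)] K show ?thesis
      by simp
  next
    case (2 p)
    then obtain g b where p: "p = (g, b)" "g \<in> carrier G" "b \<in> B"
      using supp by auto
    then have c': "c + indicator {p} \<in> freeZG G B"
      using freeZG_add[OF Suc.prems freeZG_indicator[OF p(2,3)]] by simp
    obtain z where "is_lift z (c + indicator {p})" "fill_norm G C \<theta> z \<le> K * n"
      using Suc.hyps(1)[OF _ c'] 2 by auto
    from lift_add_indicator(2)[OF c' this p(2,3), folded p(1)] K show ?thesis
      by simp
  qed
qed

end

lemma lipschitz:
  obtains K where "\<And>x. x \<in> A1 \<Longrightarrow> \<exists>z\<in>A2. \<psi> z = \<phi> x \<and> fill_norm G C \<theta> z \<le> K * fill_norm G B \<eta> x"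
proof -
  obtain y K where "\<And>b. b \<in> B \<Longrightarrow> is_lift (y b) (indicator {(\<one>, b)}) \<and> fill_norm G C \<theta> (y b) \<le> K"
    using basis_lifts by blast
  note bound = lift_l1norm_bound[OF this]
  have "\<exists>z\<in>A2. \<psi> z = \<phi> x \<and> fill_norm G C \<theta> z \<le> K * fill_norm G B \<eta> x" if "x \<in> A1" for x
  proof -
    obtain c where "c \<in> freeZG G B" "\<eta> c = x" "l1norm c = fill_norm G B \<eta> x"
      using \<open>x \<in> A1\<close> by (rule src.fill_norm_attained)
    with bound show ?thesis
      unfolding is_lift_def by metis
  qed
  with that show ?thesis
    by blast
qed

end

section \<open>Free and projective \<open>\<O>\<^sub>\<F>(G)\<close>-modules\<close>

lemma sum_fun_apply: "(\<Sum>s\<in>T. f s) t = (\<Sum>s\<in>T. f s t)"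
  by (induction T rule: infinite_finite_induct) auto

context group
begin

lemma lcos_mult_coset:
  assumes x: "x \<in> carrier G" and g: "g \<in> carrier G" and K: "subgroup K G" and L: "subgroup L G"
    and conj: "\<forall>k\<in>K. inv g \<otimes> k \<otimes> g \<in> L"
  shows "(x <# K) <#> (g <# L) = (x \<otimes> g) <# L"
proof (intro Set.set_eqI iffI)
  fix z assume "z \<in> (x <# K) <#> (g <# L)"
  then obtain k l where kl: "k \<in> K" "l \<in> L" "z = (x \<otimes> k) \<otimes> (g \<otimes> l)"
    unfolding set_mult_def l_coset_def by auto
  have "k \<in> carrier G" "l \<in> carrier G"
    using kl K L subgroup.mem_carrier by metis+
  then have "z = (x \<otimes> g) \<otimes> ((inv g \<otimes> k \<otimes> g) \<otimes> l)"
    using kl x g by (simp add: m_assoc[symmetric]) (simp add: m_assoc)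
  moreover have "(inv g \<otimes> k \<otimes> g) \<otimes> l \<in> L"
    using conj kl L subgroup.m_closed by metis
  ultimately show "z \<in> (x \<otimes> g) <# L"
    unfolding l_coset_def by auto
next
  fix z assume "z \<in> (x \<otimes> g) <# L"
  then obtain l where l: "l \<in> L" "z = (x \<otimes> g) \<otimes> l"
    unfolding l_coset_def by auto
  then have "z = (x \<otimes> \<one>) \<otimes> (g \<otimes> l)"
    using x g L subgroup.mem_carrier by (fastforce simp: m_assoc)
  with l K show "z \<in> (x <# K) <#> (g <# L)"
    unfolding set_mult_def l_coset_def by (blast intro: subgroup.one_closed)
qed

lemma lcos_eq_iff:
  assumes a: "a \<in> carrier G" and b: "b \<in> carrier G" and L: "subgroup L G"
  shows "a <# L = b <# L \<longleftrightarrow> inv a \<otimes> b \<in> L"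
proof
  assume "a <# L = b <# L"
  moreover have "b \<in> b <# L"
    using b L subgroup.one_closed unfolding l_coset_def by force
  ultimately obtain l where "l \<in> L" "b = a \<otimes> l"
    unfolding l_coset_def by auto
  with a L show "inv a \<otimes> b \<in> L"
    by (simp add: m_assoc[symmetric] subgroup.mem_carrier)
next
  assume "inv a \<otimes> b \<in> L"
  moreover have "b = a \<otimes> (inv a \<otimes> b)"
    using a b by (simp add: m_assoc[symmetric])
  ultimately have "b \<in> a <# L"
    unfolding l_coset_def by auto
  then show "a <# L = b <# L"
    using l_repr_independence a L by blast
qed

lemma subgroup_in_lcos: "subgroup K G \<Longrightarrow> K \<in> lcos G K"
  unfolding lcos_def using lcos_mult_one[of K] subgroup.subset by (metis image_eqI one_closed)

lemma Gmap_mult_right: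
  assumes "Gmap G K L \<phi>" "subgroup K G" "subgroup L G" "a \<in> carrier G" "\<phi> K = a <# L" "x \<in> carrier G"
  shows "\<phi> (x <# K) = (x \<otimes> a) <# L"
proof -
  have "\<phi> (x <# K) = x <# \<phi> K"
    using assms subgroup_in_lcos unfolding Gmap_def by auto
  with assms show ?thesis
    using lcos_m_assoc[of L x a] subgroup.subset[OF assms(3)] by simp
qed

text \<open>The representative chosen here is the one used by \<open>free_om\<close>.\<close>
lemma Gmap_coset_rep:
  assumes "Gmap G K L \<phi>" "subgroup K G"
  defines "a \<equiv> SOME a. a \<in> carrier G \<and> \<phi> K = a <# L"
  shows "a \<in> carrier G" "\<phi> K = a <# L"
proof -
  have "\<phi> K \<in> lcos G L"
    using assms subgroup_in_lcos unfolding Gmap_def by auto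
  then have "\<exists>a. a \<in> carrier G \<and> \<phi> K = a <# L"
    unfolding lcos_def by auto
  then have "a \<in> carrier G \<and> \<phi> K = a <# L"
    unfolding a_def by (rule someI_ex)
  then show "a \<in> carrier G" "\<phi> K = a <# L"
    by auto
qed

lemma inv_mult_cancel_left:
  "x \<in> carrier G \<Longrightarrow> y \<in> carrier G \<Longrightarrow> z \<in> carrier G \<Longrightarrow> inv (x \<otimes> y) \<otimes> (x \<otimes> z) = inv y \<otimes> z"
  by (simp add: inv_mult_group m_assoc[symmetric]) (simp add: m_assoc)

end

locale orbit_reps = group G for G :: "('a, 'z) monoid_scheme" (structure) +
  fixes F :: "'a set set" and act :: "'a \<Rightarrow> 's \<Rightarrow> 's" and S :: "'s set"
  assumes family: "family G F" and Gset: "Gset G act S" and isotropy: "isotropy_in G F act S"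
begin

lemma act_closed: "g \<in> carrier G \<Longrightarrow> s \<in> S \<Longrightarrow> act g s \<in> S"
  and act_one: "s \<in> S \<Longrightarrow> act \<one> s = s"
  and act_mult: "g \<in> carrier G \<Longrightarrow> h \<in> carrier G \<Longrightarrow> s \<in> S \<Longrightarrow> act (g \<otimes> h) s = act g (act h s)"
  using Gset unfolding Gset_def by auto

lemma act_inv: "g \<in> carrier G \<Longrightarrow> s \<in> S \<Longrightarrow> act (inv g) (act g s) = s"
  and act_inv': "g \<in> carrier G \<Longrightarrow> s \<in> S \<Longrightarrow> act g (act (inv g) s) = s"
  using act_mult[of "inv g" g s] act_mult[of g "inv g" s] act_one by simp_all

lemma family_subgroup: "K \<in> F \<Longrightarrow> subgroup K G"
  using family unfolding family_def by auto

lemma fixpts_in: "s \<in> fixpts G act S K \<Longrightarrow> s \<in> S"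
  unfolding fixpts_def by auto

definition orbit :: "'s \<Rightarrow> 's set" where
  "orbit s = {act g s | g. g \<in> carrier G}"

definition rep :: "'s \<Rightarrow> 's" where
  "rep s = (SOME t. t \<in> orbit s)"

definition transporter :: "'s \<Rightarrow> 'a" where
  "transporter s = (SOME g. g \<in> carrier G \<and> act g (rep s) = s)"

definition stab :: "'s \<Rightarrow> 'a set" where
  "stab t = {g \<in> carrier G. act g t = t}"

lemma rep_transporter:
  assumes s: "s \<in> S"
  shows "rep s \<in> S" "transporter s \<in> carrier G" "act (transporter s) (rep s) = s"
proof -
  have "s = act \<one> s"
    using act_one s by simp
  then have "s \<in> orbit s"
    unfolding orbit_def by blast
  then have "rep s \<in> orbit s"
    unfolding rep_def by (rule someI)
  then obtain g where g: "g \<in> carrier G" "rep s = act g s"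
    unfolding orbit_def by auto
  then show "rep s \<in> S"
    using act_closed s by simp
  have "\<exists>h. h \<in> carrier G \<and> act h (rep s) = s"
    using g act_inv s by (intro exI[of _ "inv g"]) auto
  then have "transporter s \<in> carrier G \<and> act (transporter s) (rep s) = s"
    unfolding transporter_def by (rule someI_ex)
  then show "transporter s \<in> carrier G" "act (transporter s) (rep s) = s"
    by auto
qed

lemma rep_act:
  assumes h: "h \<in> carrier G" and s: "s \<in> S"
  shows "rep (act h s) = rep s"
proof -
  have "orbit (act h s) = orbit s"
  proof (intro Set.set_eqI iffI)
    fix t assume "t \<in> orbit (act h s)"
    then obtain g where "g \<in> carrier G" "t = act g (act h s)"
      unfolding orbit_def by auto
    then have "t = act (g \<otimes> h) s \<and> g \<otimes> h \<in> carrier G"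
      using act_mult h s by simp
    then show "t \<in> orbit s"
      unfolding orbit_def by blast
  next
    fix t assume "t \<in> orbit s"
    then obtain g where g: "g \<in> carrier G" "t = act g s"
      unfolding orbit_def by auto
    then have "t = act (g \<otimes> inv h) (act h s)"
      using act_mult h s act_inv by (simp add: act_closed)
    then show "t \<in> orbit (act h s)"
      unfolding orbit_def using g h by blast
  qed
  then show ?thesis
    unfolding rep_def by simp
qed

lemma stab_in_family: "t \<in> S \<Longrightarrow> stab t \<in> F"
  using isotropy unfolding isotropy_in_def stab_def by auto

lemma stab_subgroup: "t \<in> S \<Longrightarrow> subgroup (stab t) G"
  using stab_in_family family_subgroup by blast

lemma fixpts_stab: "t \<in> S \<Longrightarrow> t \<in> fixpts G act S (stab t)"
  unfolding fixpts_def stab_def by auto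

text \<open>For \<open>s \<in> S\<^sup>K\<close>, the basis element \<open>s\<close> of \<open>\<int>[S\<^sup>K]\<close> is the image of \<open>rep s \<in> \<int>[S\<^sup>stab(rep s)]\<close>
  under this \<open>G\<close>-map \<open>G/K \<rightarrow> G/stab(rep s)\<close>.\<close>
definition orbit_map :: "'s \<Rightarrow> 'a set \<Rightarrow> 'a set \<Rightarrow> 'a set" where
  "orbit_map s K = restrict (\<lambda>C. C <#> (transporter s <# stab (rep s))) (lcos G K)"

lemma conj_in_stab:
  assumes s: "s \<in> fixpts G act S K" and K: "K \<subseteq> carrier G"
  shows "\<forall>k\<in>K. inv (transporter s) \<otimes> k \<otimes> transporter s \<in> stab (rep s)"
proof
  fix k assume k: "k \<in> K"
  have sS: "s \<in> S" and ks: "act k s = s"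
    using s k unfolding fixpts_def by auto
  have kG: "k \<in> carrier G"
    using k K by auto
  note r = rep_transporter[OF sS]
  have "act (inv (transporter s) \<otimes> k \<otimes> transporter s) (rep s)
      = act (inv (transporter s)) (act k (act (transporter s) (rep s)))"
    using r kG act_mult sS by (simp add: act_closed)
  also have "\<dots> = rep s"
    using act_inv[OF r(2) r(1)] r(3) ks by simp
  finally show "inv (transporter s) \<otimes> k \<otimes> transporter s \<in> stab (rep s)"
    unfolding stab_def using r kG by simp
qed

lemma orbit_map_value:
  assumes K: "K \<in> F" and s: "s \<in> fixpts G act S K" and x: "x \<in> carrier G"
  shows "orbit_map s K (x <# K) = (x \<otimes> transporter s) <# stab (rep s)"
proof -
  have KG: "subgroup K G"
    using family_subgroup K by blast
  have sS: "s \<in> S"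
    using s fixpts_in by blast
  have "x <# K \<in> lcos G K"
    unfolding lcos_def using x by auto
  then show ?thesis
    unfolding orbit_map_def
    using lcos_mult_coset[OF x rep_transporter(2)[OF sS] KG stab_subgroup[OF rep_transporter(1)[OF sS]]]
      conj_in_stab[OF s subgroup.subset[OF KG]] by simp
qed

lemma orbit_map_Gmap:
  assumes K: "K \<in> F" and s: "s \<in> fixpts G act S K"
  shows "Gmap G K (stab (rep s)) (orbit_map s K)"
proof -
  have KG: "subgroup K G"
    using family_subgroup K by blast
  note r = rep_transporter[OF fixpts_in[OF s]]
  have "orbit_map s K \<in> lcos G K \<rightarrow>\<^sub>E lcos G (stab (rep s))"
  proof
    fix C assume "C \<in> lcos G K"
    then obtain x where "x \<in> carrier G" "C = x <# K"
      unfolding lcos_def by auto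
    then show "orbit_map s K C \<in> lcos G (stab (rep s))"
      using orbit_map_value[OF K s] r unfolding lcos_def by auto
  qed (simp add: orbit_map_def)
  moreover have "orbit_map s K (g <# C) = g <# orbit_map s K C"
    if g: "g \<in> carrier G" and C: "C \<in> lcos G K" for g C
  proof -
    obtain x where x: "x \<in> carrier G" "C = x <# K"
      using C unfolding lcos_def by auto
    then have "g <# C = (g \<otimes> x) <# K"
      using g lcos_m_assoc subgroup.subset[OF KG] by simp
    then have "orbit_map s K (g <# C) = (g \<otimes> x \<otimes> transporter s) <# stab (rep s)"
      using orbit_map_value[OF K s] x g by simp
    also have "\<dots> = g <# ((x \<otimes> transporter s) <# stab (rep s))"
      using lcos_m_assoc subgroup.subset[OF stab_subgroup[OF r(1)]] x g r by (simp add: m_assoc)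
    finally show ?thesis
      using orbit_map_value[OF K s x(1)] x by simp
  qed
  ultimately show ?thesis
    unfolding Gmap_def by auto
qed

context
  fixes K L \<phi> a
  assumes K: "K \<in> F" and L: "L \<in> F" and \<phi>: "Gmap G K L \<phi>" and a: "a \<in> carrier G"
    and \<phi>_a: "\<And>x. x \<in> carrier G \<Longrightarrow> \<phi> (x <# K) = (x \<otimes> a) <# L"
begin

lemma act_fixpts_Gmap:
  assumes s: "s \<in> fixpts G act S L"
  shows "act a s \<in> fixpts G act S K"
proof -
  have KG: "subgroup K G" and LG: "subgroup L G"
    using family_subgroup K L by auto
  have sS: "s \<in> S"
    using s fixpts_in by blast
  have "act k (act a s) = act a s" if k: "k \<in> K" for k
  proof -
    have k': "inv k \<in> K"
      using subgroup.m_inv_closed[OF KG k] .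
    then have kG: "k \<in> carrier G" "inv k \<in> carrier G"
      using k subgroup.mem_carrier[OF KG] by auto
    have "inv k <# K = \<one> <# K"
      using lcos_eq_iff[OF kG(2) one_closed KG] kG k by simp
    then have "(inv k \<otimes> a) <# L = (\<one> \<otimes> a) <# L"
      using \<phi>_a kG by (metis one_closed)
    then have "inv (inv k \<otimes> a) \<otimes> a \<in> L"
      using lcos_eq_iff kG a LG by simp
    then have "inv a \<otimes> k \<otimes> a \<in> L"
      using kG a by (simp add: inv_mult_group)
    then have "act (inv a \<otimes> k \<otimes> a) s = s"
      using s unfolding fixpts_def by auto
    then have "act a (act (inv a \<otimes> k \<otimes> a) s) = act a s"
      by simp
    then show ?thesis
      using act_mult kG a sS by (simp add: m_assoc[symmetric] act_closed act_inv')
  qed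
  with sS a show ?thesis
    unfolding fixpts_def by (simp add: act_closed)
qed

lemma orbit_map_act:
  assumes s: "s \<in> fixpts G act S L"
  shows "orbit_map (act a s) K = restrict (orbit_map s L \<circ> \<phi>) (lcos G K)"
proof
  fix C
  show "orbit_map (act a s) K C = restrict (orbit_map s L \<circ> \<phi>) (lcos G K) C"
  proof (cases "C \<in> lcos G K")
    case False
    then show ?thesis
      unfolding orbit_map_def by simp
  next
    case True
    then obtain x where x: "x \<in> carrier G" "C = x <# K"
      unfolding lcos_def by auto
    have sS: "s \<in> S"
      using s fixpts_in by blast
    let ?R = "stab (rep s)" and ?t = "transporter (act a s)"
    note r = rep_transporter[OF sS] and r' = rep_transporter[OF act_closed[OF a sS]]
    have ras: "rep (act a s) = rep s"
      using rep_act a sS by blast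
    have "act (inv ?t \<otimes> (a \<otimes> transporter s)) (rep s) = act (inv ?t) (act a (act (transporter s) (rep s)))"
      using act_mult r r' a by (simp add: act_closed)
    also have "\<dots> = rep s"
      using act_inv[OF r'(2) r'(1)] ras r(3) r'(3) by simp
    finally have "inv (x \<otimes> ?t) \<otimes> (x \<otimes> a \<otimes> transporter s) \<in> ?R"
      unfolding stab_def using inv_mult_cancel_left x r r' a by (simp add: m_assoc)
    then have "(x \<otimes> ?t) <# ?R = (x \<otimes> a \<otimes> transporter s) <# ?R"
      using lcos_eq_iff x r r' a stab_subgroup[OF r(1)] by simp
    then show ?thesis
      using True x \<phi>_a orbit_map_value[OF L s] a orbit_map_value[OF K act_fixpts_Gmap[OF s] x(1)] ras
      by simp
  qed
qed

end

end

lemma free_mod_simps [simp]: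
  "oc (free_mod G act S) = free_oc G act S" "om (free_mod G act S) = free_om G act"
  by (simp_all add: free_mod_def)

lemma free_oc_add_subgroup: "add_subgroup (free_oc G act S K)"
proof -
  have "c + d \<in> free_oc G act S K" if "c \<in> free_oc G act S K" "d \<in> free_oc G act S K" for c d
  proof -
    have "{s. (c + d) s \<noteq> 0} \<subseteq> {s. c s \<noteq> 0} \<union> {s. d s \<noteq> 0}"
      by auto
    with that show ?thesis
      unfolding free_oc_def by (auto intro: finite_subset)
  qed
  then show ?thesis
    unfolding add_subgroup_def free_oc_def by auto
qed

lemma indicator_free_oc: "t \<in> fixpts G act S K \<Longrightarrow> indicator {t} \<in> free_oc G act S K"
  unfolding free_oc_def by (auto simp: indicator_def)

lemma omod_add_subgroup: "is_omod G F M \<Longrightarrow> K \<in> F \<Longrightarrow> add_subgroup (oc M K)"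
  unfolding is_omod_def add_subgroup_def by auto

lemma omod_map: "is_omod G F M \<Longrightarrow> K \<in> F \<Longrightarrow> L \<in> F \<Longrightarrow> Gmap G K L \<phi> \<Longrightarrow>
    additive_on (oc M L) (om M \<phi> K L) \<and> (\<forall>x\<in>oc M L. om M \<phi> K L x \<in> oc M K)"
  unfolding is_omod_def additive_on_def by auto

lemma omod_comp: "is_omod G F M \<Longrightarrow> K \<in> F \<Longrightarrow> L \<in> F \<Longrightarrow> J \<in> F \<Longrightarrow> Gmap G K L \<phi> \<Longrightarrow> Gmap G L J \<psi> \<Longrightarrow>
    x \<in> oc M J \<Longrightarrow> om M (restrict (\<psi> \<circ> \<phi>) (lcos G K)) K J x = om M \<phi> K L (om M \<psi> L J x)"
  unfolding is_omod_def by blast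

lemma hom_closed: "is_hom G F M N f \<Longrightarrow> K \<in> F \<Longrightarrow> x \<in> oc M K \<Longrightarrow> f K x \<in> oc N K"
  unfolding is_hom_def by blast

lemma hom_additive: "is_hom G F M N f \<Longrightarrow> K \<in> F \<Longrightarrow> additive_on (oc M K) (f K)"
  unfolding is_hom_def additive_on_def by blast

lemma hom_natural: "is_hom G F M N f \<Longrightarrow> K \<in> F \<Longrightarrow> L \<in> F \<Longrightarrow> Gmap G K L \<phi> \<Longrightarrow> x \<in> oc M L \<Longrightarrow>
    f K (om M \<phi> K L x) = om N \<phi> K L (f L x)"
  unfolding is_hom_def by blast

lemma hom_comp: "is_hom G F M1 M2 f \<Longrightarrow> is_hom G F M2 M3 g \<Longrightarrow> is_hom G F M1 M3 (\<lambda>K x. g K (f K x))"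
  unfolding is_hom_def by auto

lemma hom_id: "is_hom G F M M (\<lambda>K x. x)"
  unfolding is_hom_def by auto

lemma hom_diff:
  assumes N: "is_omod G F N" and f: "is_hom G F M N f" and g: "is_hom G F M N g"
  shows "is_hom G F M N (\<lambda>K x. f K x - g K x)"
proof -
  have "f K (om M \<phi> K L x) - g K (om M \<phi> K L x) = om N \<phi> K L (f L x - g L x)"
    if "K \<in> F" "L \<in> F" "Gmap G K L \<phi>" "x \<in> oc M L" for K L \<phi> x
    using additive_on_diff[OF omod_add_subgroup[OF N that(2)] conjunct1[OF omod_map[OF N that(1-3)]]]
      hom_closed[OF f that(2,4)] hom_closed[OF g that(2,4)] hom_natural[OF f that] hom_natural[OF g that]
    by simp
  moreover have "f K x - g K x \<in> oc N K" if "K \<in> F" "x \<in> oc M K" for K x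
    using that f g hom_closed omod_add_subgroup[OF N] add_subgroup_diff by metis
  ultimately show ?thesis
    using f g unfolding is_hom_def by (simp add: algebra_simps)
qed

text \<open>Lifting property of \<open>\<int>[-,S]\<close>: the basis element \<open>t \<in> \<int>[S\<^sup>stab t]\<close> of each orbit representative
  gets a chosen lift \<open>rep_lift t\<close>, and every other basis element \<open>s\<close> is lifted by transporting the
  lift of \<open>rep s\<close> along \<open>orbit_map s K\<close>.\<close>
locale free_lifting = orbit_reps G F act S
  for G :: "('a, 'z) monoid_scheme" (structure) and F and act :: "'a \<Rightarrow> 's \<Rightarrow> 's" and S +
  fixes Q :: "('a, 'q::ab_group_add) omod" and N :: "('a, 'n::ab_group_add) omod"
    and p :: "'a set \<Rightarrow> 'q \<Rightarrow> 'n" and U :: "'a set \<Rightarrow> ('s \<Rightarrow> int) \<Rightarrow> 'n"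
  assumes Q: "is_omod G F Q" and p: "is_hom G F Q N p" and U: "is_hom G F (free_mod G act S) N U"
    and image: "\<forall>K\<in>F. U K ` free_oc G act S K \<subseteq> p K ` oc Q K"
begin

definition rep_lift :: "'s \<Rightarrow> 'q" where
  "rep_lift t = (SOME y. y \<in> oc Q (stab t) \<and> p (stab t) y = U (stab t) (indicator {t}))"

definition fixed_lift :: "'a set \<Rightarrow> 's \<Rightarrow> 'q" where
  "fixed_lift K s = om Q (orbit_map s K) K (stab (rep s)) (rep_lift (rep s))"

definition free_lift :: "'a set \<Rightarrow> ('s \<Rightarrow> int) \<Rightarrow> 'q" where
  "free_lift K c = (\<Sum>s\<in>{s. c s \<noteq> 0}. int_scale (c s) (fixed_lift K s))"

lemma rep_lift:
  assumes t: "t \<in> S"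
  shows "rep_lift t \<in> oc Q (stab t)" "p (stab t) (rep_lift t) = U (stab t) (indicator {t})"
proof -
  have "\<exists>y. y \<in> oc Q (stab t) \<and> p (stab t) y = U (stab t) (indicator {t})"
    using image stab_in_family[OF t] indicator_free_oc[OF fixpts_stab[OF t]] by fastforce
  then have "rep_lift t \<in> oc Q (stab t) \<and> p (stab t) (rep_lift t) = U (stab t) (indicator {t})"
    unfolding rep_lift_def by (rule someI_ex)
  then show "rep_lift t \<in> oc Q (stab t)" "p (stab t) (rep_lift t) = U (stab t) (indicator {t})"
    by auto
qed

lemma fixed_lift_closed:
  assumes K: "K \<in> F" and s: "s \<in> fixpts G act S K"
  shows "fixed_lift K s \<in> oc Q K"
proof -
  note r = rep_transporter[OF fixpts_in[OF s]]
  show ?thesis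
    unfolding fixed_lift_def
    using omod_map[OF Q K stab_in_family[OF r(1)] orbit_map_Gmap[OF K s]] rep_lift(1)[OF r(1)] by blast
qed

lemma free_lift_eq_sum:
  "finite T \<Longrightarrow> {s. c s \<noteq> 0} \<subseteq> T \<Longrightarrow> free_lift K c = (\<Sum>s\<in>T. int_scale (c s) (fixed_lift K s))"
  unfolding free_lift_def by (rule sum.mono_neutral_left) auto

lemma free_lift_closed:
  assumes K: "K \<in> F" and c: "c \<in> free_oc G act S K"
  shows "free_lift K c \<in> oc Q K"
  unfolding free_lift_def using c fixed_lift_closed[OF K] add_subgroup_int_scale[OF omod_add_subgroup[OF Q K]]
  by (intro add_subgroup_sum[OF omod_add_subgroup[OF Q K]]) (auto simp: free_oc_def)

lemma free_lift_add:
  assumes "c \<in> free_oc G act S K" "d \<in> free_oc G act S K"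
  shows "free_lift K (c + d) = free_lift K c + free_lift K d"
proof -
  let ?T = "{s. c s \<noteq> 0} \<union> {s. d s \<noteq> 0}"
  have T: "finite ?T"
    using assms unfolding free_oc_def by auto
  have "free_lift K (c + d) = (\<Sum>s\<in>?T. int_scale ((c + d) s) (fixed_lift K s))"
    by (rule free_lift_eq_sum[OF T]) auto
  also have "\<dots> = free_lift K c + free_lift K d"
    using free_lift_eq_sum[OF T, of c] free_lift_eq_sum[OF T, of d] by (auto simp: int_scale_add sum.distrib)
  finally show ?thesis .
qed

lemma fixed_lift_natural:
  assumes K: "K \<in> F" and L: "L \<in> F" and \<phi>: "Gmap G K L \<phi>" and a: "a \<in> carrier G"
    and \<phi>_a: "\<And>x. x \<in> carrier G \<Longrightarrow> \<phi> (x <# K) = (x \<otimes> a) <# L"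
    and s: "s \<in> fixpts G act S L"
  shows "fixed_lift K (act a s) = om Q \<phi> K L (fixed_lift L s)"
proof -
  have sS: "s \<in> S"
    using s fixpts_in by blast
  note r = rep_transporter[OF sS]
  let ?R = "stab (rep s)"
  have "om Q \<phi> K L (fixed_lift L s) = om Q \<phi> K L (om Q (orbit_map s L) L ?R (rep_lift (rep s)))"
    unfolding fixed_lift_def ..
  also have "\<dots> = om Q (restrict (orbit_map s L \<circ> \<phi>) (lcos G K)) K ?R (rep_lift (rep s))"
    using omod_comp[OF Q K L stab_in_family[OF r(1)] \<phi> orbit_map_Gmap[OF L s]] rep_lift(1)[OF r(1)] by simp
  also have "\<dots> = fixed_lift K (act a s)"
    using orbit_map_act[OF K L \<phi> a \<phi>_a s] rep_act[OF a sS] by (simp add: fixed_lift_def)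
  finally show ?thesis
    by simp
qed

lemma free_lift_natural:
  assumes K: "K \<in> F" and L: "L \<in> F" and \<phi>: "Gmap G K L \<phi>" and c: "c \<in> free_oc G act S L"
  shows "free_lift K (free_om G act \<phi> K L c) = om Q \<phi> K L (free_lift L c)"
proof -
  have KG: "subgroup K G" "subgroup L G"
    using family_subgroup K L by auto
  define a where "a = (SOME a. a \<in> carrier G \<and> \<phi> K = a <# L)"
  have a: "a \<in> carrier G" "\<phi> K = a <# L"
    unfolding a_def by (rule Gmap_coset_rep[OF \<phi> KG(1)])+
  have \<phi>_a: "\<phi> (x <# K) = (x \<otimes> a) <# L" if "x \<in> carrier G" for x
    using Gmap_mult_right[OF \<phi> KG a that] .
  define T where "T = {s. c s \<noteq> 0}"
  have T: "finite T" "T \<subseteq> fixpts G act S L"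
    using c unfolding T_def free_oc_def by auto
  have Q_L: "add_subgroup (oc Q L)" and om_L: "additive_on (oc Q L) (om Q \<phi> K L)"
    using omod_add_subgroup[OF Q L] omod_map[OF Q K L \<phi>] by auto
  define c' where "c' = (\<lambda>t. \<Sum>s\<in>{s\<in>T. act a s = t}. c s)"
  have c': "free_om G act \<phi> K L c = c'"
    unfolding free_om_def Let_def a_def[symmetric] c'_def T_def by simp
  have "{t. c' t \<noteq> 0} \<subseteq> act a ` T"
  proof
    fix t assume "t \<in> {t. c' t \<noteq> 0}"
    then have "{s\<in>T. act a s = t} \<noteq> {}"
      unfolding c'_def by (intro notI) (simp only: sum.empty mem_Collect_eq)
    then show "t \<in> act a ` T"
      by auto
  qed
  then have "free_lift K c' = (\<Sum>t\<in>act a ` T. int_scale (c' t) (fixed_lift K t))"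
    using T by (intro free_lift_eq_sum) auto
  also have "\<dots> = (\<Sum>t\<in>act a ` T. \<Sum>s\<in>{s\<in>T. act a s = t}. int_scale (c s) (fixed_lift K t))"
    unfolding c'_def int_scale_sum ..
  also have "\<dots> = (\<Sum>t\<in>act a ` T. \<Sum>s\<in>{s\<in>T. act a s = t}. int_scale (c s) (fixed_lift K (act a s)))"
    by (intro sum.cong refl) auto
  also have "\<dots> = (\<Sum>s\<in>T. int_scale (c s) (fixed_lift K (act a s)))"
    by (rule sum.image_gen[symmetric, OF T(1)])
  also have "\<dots> = (\<Sum>s\<in>T. om Q \<phi> K L (int_scale (c s) (fixed_lift L s)))"
    using T(2) fixed_lift_natural[OF K L \<phi> a(1) \<phi>_a] fixed_lift_closed[OF L]
      additive_on_int_scale[OF Q_L om_L] by (intro sum.cong) auto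
  also have "\<dots> = om Q \<phi> K L (free_lift L c)"
    unfolding free_lift_def T_def[symmetric] using T(2) fixed_lift_closed[OF L]
    by (intro additive_on_sum[OF Q_L om_L, symmetric] add_subgroup_int_scale[OF Q_L]) auto
  finally show ?thesis
    using c' by simp
qed

lemma free_om_indicator_rep:
  assumes K: "K \<in> F" and s: "s \<in> fixpts G act S K"
  shows "free_om G act (orbit_map s K) K (stab (rep s)) (indicator {rep s}) = indicator {s}"
proof -
  let ?R = "stab (rep s)"
  note r = rep_transporter[OF fixpts_in[OF s]]
  define a where "a = (SOME a. a \<in> carrier G \<and> orbit_map s K K = a <# ?R)"
  have a: "a \<in> carrier G" "orbit_map s K K = a <# ?R"
    unfolding a_def by (rule Gmap_coset_rep[OF orbit_map_Gmap[OF K s] family_subgroup[OF K]])+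
  have "orbit_map s K K = transporter s <# ?R"
    using orbit_map_value[OF K s one_closed] lcos_mult_one[OF subgroup.subset[OF family_subgroup[OF K]]] r
    by simp
  then have "inv a \<otimes> transporter s \<in> ?R"
    using lcos_eq_iff[OF a(1) r(2) stab_subgroup[OF r(1)]] a by simp
  then have "act a (act (inv a \<otimes> transporter s) (rep s)) = act a (rep s)"
    unfolding stab_def by simp
  then have a_rep: "act a (rep s) = s"
    using act_mult a r fixpts_in[OF s] by (simp add: m_assoc[symmetric] act_closed act_inv')
  have "{x. (indicator {rep s} x :: int) \<noteq> 0 \<and> act a x = t} = (if t = s then {rep s} else {})" for t
    using a_rep by (auto simp: indicator_def)
  then show ?thesis
    unfolding free_om_def Let_def a_def[symmetric] by (auto simp: fun_eq_iff indicator_def)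
qed

lemma fixed_lift_lifts:
  assumes K: "K \<in> F" and s: "s \<in> fixpts G act S K"
  shows "p K (fixed_lift K s) = U K (indicator {s})"
proof -
  note r = rep_transporter[OF fixpts_in[OF s]]
  let ?R = "stab (rep s)"
  have R: "?R \<in> F"
    using stab_in_family r by blast
  note orbit_map = orbit_map_Gmap[OF K s]
  have "p K (fixed_lift K s) = om N (orbit_map s K) K ?R (p ?R (rep_lift (rep s)))"
    unfolding fixed_lift_def using hom_natural[OF p K R orbit_map] rep_lift(1)[OF r(1)] .
  also have "\<dots> = om N (orbit_map s K) K ?R (U ?R (indicator {rep s}))"
    using rep_lift(2)[OF r(1)] by simp
  also have "\<dots> = U K (free_om G act (orbit_map s K) K ?R (indicator {rep s}))"
    using hom_natural[OF U K R orbit_map] indicator_free_oc[OF fixpts_stab[OF r(1)]] by simp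
  also have "\<dots> = U K (indicator {s})"
    using free_om_indicator_rep[OF K s] by simp
  finally show ?thesis .
qed

lemma free_lift_lifts:
  assumes K: "K \<in> F" and c: "c \<in> free_oc G act S K"
  shows "p K (free_lift K c) = U K c"
proof -
  define T where "T = {s. c s \<noteq> 0}"
  have T: "finite T" "T \<subseteq> fixpts G act S K"
    using c unfolding T_def free_oc_def by auto
  have Q_K: "add_subgroup (oc Q K)" and free: "add_subgroup (free_oc G act S K)"
    using omod_add_subgroup[OF Q K] free_oc_add_subgroup by auto
  note p_K = hom_additive[OF p K] and U_K = hom_additive[OF U K, simplified]
  have "p K (free_lift K c) = (\<Sum>s\<in>T. p K (int_scale (c s) (fixed_lift K s)))"
    unfolding free_lift_def T_def[symmetric] using T(2) fixed_lift_closed[OF K]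
    by (intro additive_on_sum[OF Q_K p_K] add_subgroup_int_scale[OF Q_K]) auto
  also have "\<dots> = (\<Sum>s\<in>T. U K (int_scale (c s) (indicator {s})))"
  proof (intro sum.cong refl)
    fix s assume "s \<in> T"
    then have s: "s \<in> fixpts G act S K"
      using T(2) by auto
    show "p K (int_scale (c s) (fixed_lift K s)) = U K (int_scale (c s) (indicator {s}))"
      using additive_on_int_scale[OF Q_K p_K fixed_lift_closed[OF K s]] fixed_lift_lifts[OF K s]
        additive_on_int_scale[OF free U_K indicator_free_oc[OF s]] by simp
  qed
  also have "\<dots> = U K (\<Sum>s\<in>T. int_scale (c s) (indicator {s}))"
    using T(2) by (intro additive_on_sum[OF free U_K, symmetric] add_subgroup_int_scale[OF free] indicator_free_oc) auto
  also have "(\<Sum>s\<in>T. int_scale (c s) (indicator {s})) = c"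
  proof
    fix t
    have "(\<Sum>s\<in>T. int_scale (c s) (indicator {s})) t = (\<Sum>s\<in>T. if s = t then c s else 0)"
      unfolding sum_fun_apply int_scale_fun by (intro sum.cong) (auto simp: indicator_def)
    also have "\<dots> = c t"
      using T(1) unfolding T_def by (simp add: sum.delta)
    finally show "(\<Sum>s\<in>T. int_scale (c s) (indicator {s})) t = c t" .
  qed
  finally show ?thesis .
qed

lemma free_lift_hom: "is_hom G F (free_mod G act S) Q free_lift"
  unfolding is_hom_def using free_lift_closed free_lift_add free_lift_natural by simp

end

lemma projective_lifting:
  fixes G :: "('a, 'z) monoid_scheme" and M :: "('a, 'm::ab_group_add) omod"
  assumes G: "group G" and F: "family G F" and M: "projective G F M"
    and Q: "is_omod G F Q" and p: "is_hom G F Q N p" and u: "is_hom G F M N u"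
    and image: "\<forall>K\<in>F. u K ` oc M K \<subseteq> p K ` oc Q K"
  shows "\<exists>f. is_hom G F M Q f \<and> (\<forall>K\<in>F. \<forall>x\<in>oc M K. p K (f K x) = u K x)"
proof -
  obtain S :: "('a set \<times> 'a set \<times> 'm) set" and act i r
    where S: "Gset G act S" "isotropy_in G F act S"
      and i: "is_hom G F M (free_mod G act S) i" and r: "is_hom G F (free_mod G act S) M r"
      and retract: "\<forall>K\<in>F. \<forall>x\<in>oc M K. r K (i K x) = x"
    using M unfolding projective_def by auto
  define U where "U = (\<lambda>K x. u K (r K x))"
  have U: "is_hom G F (free_mod G act S) N U"
    unfolding U_def by (rule hom_comp[OF r u])
  have "\<forall>K\<in>F. U K ` free_oc G act S K \<subseteq> p K ` oc Q K"
    using image hom_closed[OF r] unfolding U_def by fastforce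
  then interpret free_lifting G F act S Q N p U
    using G F S Q p U
    by (intro free_lifting.intro orbit_reps.intro free_lifting_axioms.intro orbit_reps_axioms.intro) auto
  have "is_hom G F M Q (\<lambda>K x. free_lift K (i K x))"
    by (rule hom_comp[OF i free_lift_hom])
  moreover have "\<forall>K\<in>F. \<forall>x\<in>oc M K. p K (free_lift K (i K x)) = u K x"
    using free_lift_lifts hom_closed[OF i] retract unfolding U_def by simp
  ultimately show ?thesis
    by blast
qed

section \<open>Comparison of resolutions\<close>

lemma (in group) right_translation_Gmap:
  assumes h: "h \<in> carrier G"
  shows "Gmap G {\<one>} {\<one>} (restrict (\<lambda>c. c #> h) (lcos G {\<one>}))"
proof -
  let ?\<rho> = "restrict (\<lambda>c. c #> h) (lcos G {\<one>})"
  have L: "lcos G {\<one>} = (\<lambda>x. {x}) ` carrier G"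
    unfolding lcos_def l_coset_def by auto
  have \<rho>: "?\<rho> {x} = {x \<otimes> h}" if "x \<in> carrier G" for x
    using that unfolding L r_coset_def by auto
  have "?\<rho> \<in> lcos G {\<one>} \<rightarrow>\<^sub>E lcos G {\<one>}"
    using \<rho> h unfolding L by auto
  moreover have "?\<rho> (g <# C) = g <# ?\<rho> C" if g: "g \<in> carrier G" and C: "C \<in> lcos G {\<one>}" for g C
  proof -
    obtain x where "x \<in> carrier G" "C = {x}"
      using C L by auto
    with g h \<rho> show ?thesis
      unfolding l_coset_def by (simp add: m_assoc)
  qed
  ultimately show ?thesis
    unfolding Gmap_def by blast
qed

lemma hom_gact:
  assumes "group G" "is_hom G F M M' f" "{\<one>\<^bsub>G\<^esub>} \<in> F" "h \<in> carrier G" "x \<in> oc M {\<one>\<^bsub>G\<^esub>}"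
  shows "f {\<one>\<^bsub>G\<^esub>} (gact G M h x) = gact G M' h (f {\<one>\<^bsub>G\<^esub>} x)"
  unfolding gact_def using hom_natural[OF assms(2,3,3) group.right_translation_Gmap[OF assms(1,4)] assms(5)] .

lemma FP2_resD:
  assumes "FP2_res G F P d eps"
  shows "\<And>n. is_omod G F (P n)" "\<And>n. projective G F (P n)"
    "is_hom G F (P 1) (P 0) (d 0)" "is_hom G F (P 2) (P 1) (d 1)"
    "is_hom G F (P 0) (Zmod G) eps" "\<forall>K\<in>F. eps K ` oc (P 0) K = oc (Zmod G) K"
    "\<forall>K\<in>F. {x\<in>oc (P 0) K. eps K x = 0} = d 0 K ` oc (P 1) K"
    "\<forall>K\<in>F. {x\<in>oc (P 1) K. d 0 K x = 0} = d 1 K ` oc (P 2) K"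
proof -
  have "proj_res G F P d eps"
    using assms unfolding FP2_res_def by blast
  then have modules: "\<forall>n. is_omod G F (P n) \<and> projective G F (P n)"
    and maps: "\<forall>n. is_hom G F (P (Suc n)) (P n) (d n)"
    and eps: "is_hom G F (P 0) (Zmod G) eps" "\<forall>K\<in>F. eps K ` oc (P 0) K = oc (Zmod G) K"
    and exact0: "exact_at F (oc (P 0)) (d 0) (oc (P 1)) eps"
    and exact1: "exact_at F (oc (P (Suc 0))) (d (Suc 0)) (oc (P (Suc (Suc 0)))) (d 0)"
    unfolding proj_res_def by blast+
  show "\<And>n. is_omod G F (P n)" "\<And>n. projective G F (P n)"
    using modules by blast+
  show "is_hom G F (P 1) (P 0) (d 0)" "is_hom G F (P 2) (P 1) (d 1)"
    using maps spec[OF maps, of 1] by (simp_all add: numeral_2_eq_2)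
  show "is_hom G F (P 0) (Zmod G) eps" "\<forall>K\<in>F. eps K ` oc (P 0) K = oc (Zmod G) K"
    by (fact eps)+
  show "\<forall>K\<in>F. {x\<in>oc (P 0) K. eps K x = 0} = d 0 K ` oc (P 1) K"
    using exact0 unfolding exact_at_def .
  show "\<forall>K\<in>F. {x\<in>oc (P 1) K. d 0 K x = 0} = d 1 K ` oc (P 2) K"
    using exact1 unfolding exact_at_def numeral_2_eq_2 One_nat_def .
qed

lemma family_trivial_subgroup:
  assumes G: "group G" and F: "family G F"
  shows "{\<one>\<^bsub>G\<^esub>} \<in> F"
proof -
  obtain H where "H \<in> F" "subgroup H G"
    using F unfolding family_def by auto
  moreover have "subgroup {\<one>\<^bsub>G\<^esub>} G"
    using group.triv_subgroup[OF G] .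
  ultimately show ?thesis
    using F subgroup.one_closed unfolding family_def by blast
qed

lemma FP2_res_comparison_maps:
  fixes G :: "('a, 'z) monoid_scheme"
    and P :: "nat \<Rightarrow> ('a, 'm::ab_group_add) omod" and Q :: "nat \<Rightarrow> ('a, 'n::ab_group_add) omod"
  assumes G: "group G" and F: "family G F" and P: "FP2_res G F P d eps" and Q: "FP2_res G F Q d' eps'"
  obtains f0 f1 where "is_hom G F (P 0) (Q 0) f0" "\<forall>K\<in>F. \<forall>x\<in>oc (P 0) K. eps' K (f0 K x) = eps K x"
    "is_hom G F (P 1) (Q 1) f1" "\<forall>K\<in>F. \<forall>x\<in>oc (P 1) K. d' 0 K (f1 K x) = f0 K (d 0 K x)"
proof -
  note P = FP2_resD[OF P] and Q = FP2_resD[OF Q]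
  obtain f0 where f0: "is_hom G F (P 0) (Q 0) f0" "\<forall>K\<in>F. \<forall>x\<in>oc (P 0) K. eps' K (f0 K x) = eps K x"
    using projective_lifting[OF G F P(2) Q(1) Q(5) P(5)] P(5) Q(6) hom_closed by blast
  have "\<forall>K\<in>F. (\<lambda>K x. f0 K (d 0 K x)) K ` oc (P 1) K \<subseteq> d' 0 K ` oc (Q 1) K"
  proof (intro ballI image_subsetI)
    fix K x assume K: "K \<in> F" and x: "x \<in> oc (P 1) K"
    then have "d 0 K x \<in> oc (P 0) K" "eps K (d 0 K x) = 0"
      using P(7) by auto
    then have "f0 K (d 0 K x) \<in> {y \<in> oc (Q 0) K. eps' K y = 0}"
      using hom_closed[OF f0(1) K] f0(2) K by auto
    then show "f0 K (d 0 K x) \<in> d' 0 K ` oc (Q 1) K"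
      using Q(7) K by blast
  qed
  then obtain f1 where "is_hom G F (P 1) (Q 1) f1" "\<forall>K\<in>F. \<forall>x\<in>oc (P 1) K. d' 0 K (f1 K x) = f0 K (d 0 K x)"
    using projective_lifting[OF G F P(2) Q(1) Q(3) hom_comp[OF P(3) f0(1)]] by blast
  with f0 that show ?thesis
    by blast
qed

lemma FP2_res_homotopy0:
  fixes G :: "('a, 'z) monoid_scheme" and P :: "nat \<Rightarrow> ('a, 'm::ab_group_add) omod"
  assumes G: "group G" and F: "family G F" and P: "FP2_res G F P d eps"
    and w: "is_hom G F (P 0) (P 0) w" "\<forall>K\<in>F. \<forall>x\<in>oc (P 0) K. eps K (w K x) = eps K x"
  obtains h where "is_hom G F (P 0) (P 1) h" "\<forall>K\<in>F. \<forall>x\<in>oc (P 0) K. d 0 K (h K x) = w K x - x"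
proof -
  note P = FP2_resD[OF P]
  have w_id: "is_hom G F (P 0) (P 0) (\<lambda>K x. w K x - x)"
    by (rule hom_diff[OF P(1) w(1) hom_id])
  have "\<forall>K\<in>F. (\<lambda>K x. w K x - x) K ` oc (P 0) K \<subseteq> d 0 K ` oc (P 1) K"
  proof (intro ballI image_subsetI)
    fix K x assume K: "K \<in> F" and x: "x \<in> oc (P 0) K"
    have "eps K (w K x - x) = eps K (w K x) - eps K x"
      using additive_on_diff[OF omod_add_subgroup[OF P(1) K] hom_additive[OF P(5) K] hom_closed[OF w(1) K x] x] .
    then have "w K x - x \<in> {y \<in> oc (P 0) K. eps K y = 0}"
      using hom_closed[OF w_id K x] w(2) K x by simp
    then show "w K x - x \<in> d 0 K ` oc (P 1) K"
      using P(7) K by blast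
  qed
  with projective_lifting[OF G F P(2) P(1) P(3) w_id] that show ?thesis
    by blast
qed

lemma hom_lipschitz_lift:
  assumes G: "group G" and I: "{\<one>\<^bsub>G\<^esub>} \<in> F"
    and \<phi>: "is_hom G F M N \<phi>" and \<psi>: "is_hom G F L N \<psi>"
    and \<eta>: "filling_map G B (oc M {\<one>\<^bsub>G\<^esub>}) (gact G M) \<eta>"
    and \<theta>: "filling_map G C (oc L {\<one>\<^bsub>G\<^esub>}) (gact G L) \<theta>"
    and image: "\<phi> {\<one>\<^bsub>G\<^esub>} ` oc M {\<one>\<^bsub>G\<^esub>} \<subseteq> \<psi> {\<one>\<^bsub>G\<^esub>} ` oc L {\<one>\<^bsub>G\<^esub>}"
  obtains K where "\<And>x. x \<in> oc M {\<one>\<^bsub>G\<^esub>} \<Longrightarrow> \<exists>y\<in>oc L {\<one>\<^bsub>G\<^esub>}.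
    \<psi> {\<one>\<^bsub>G\<^esub>} y = \<phi> {\<one>\<^bsub>G\<^esub>} x \<and> fill_norm G C \<theta> y \<le> K * fill_norm G B \<eta> x"
proof -
  interpret lipschitz_lift G B "oc M {\<one>\<^bsub>G\<^esub>}" "gact G M" \<eta> C "oc L {\<one>\<^bsub>G\<^esub>}" "gact G L" \<theta>
    "\<phi> {\<one>\<^bsub>G\<^esub>}" "\<psi> {\<one>\<^bsub>G\<^esub>}" "gact G N"
    using G I \<eta> \<theta> image hom_additive[OF \<phi> I] hom_additive[OF \<psi> I] hom_gact[OF G \<phi> I] hom_gact[OF G \<psi> I]
    by (intro lipschitz_lift.intro lipschitz_lift_axioms.intro filling_norm.intro filling_norm_axioms.intro) auto
  from lipschitz that show ?thesis
    by blast
qed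

lemma hom_fill_norm_bound:
  assumes G: "group G" and I: "{\<one>\<^bsub>G\<^esub>} \<in> F" and \<phi>: "is_hom G F M N \<phi>"
    and \<eta>: "filling_map G B (oc M {\<one>\<^bsub>G\<^esub>}) (gact G M) \<eta>"
    and \<theta>: "filling_map G C (oc N {\<one>\<^bsub>G\<^esub>}) (gact G N) \<theta>"
  obtains K where "\<And>x. x \<in> oc M {\<one>\<^bsub>G\<^esub>} \<Longrightarrow> fill_norm G C \<theta> (\<phi> {\<one>\<^bsub>G\<^esub>} x) \<le> K * fill_norm G B \<eta> x"
proof -
  have "\<phi> {\<one>\<^bsub>G\<^esub>} ` oc M {\<one>\<^bsub>G\<^esub>} \<subseteq> (\<lambda>y. y) ` oc N {\<one>\<^bsub>G\<^esub>}"
    using hom_closed[OF \<phi> I] by auto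
  with hom_lipschitz_lift[OF G I \<phi> hom_id \<eta> \<theta>] that show ?thesis
    by (metis (no_types, lifting))
qed

lemma cycle_valued_hom_fill_bound:
  assumes G: "group G" and I: "{\<one>\<^bsub>G\<^esub>} \<in> F" and P: "FP2_res G F P d eps"
    and \<eta>2: "filling_map G B2 (oc (P 2) {\<one>\<^bsub>G\<^esub>}) (gact G (P 2)) \<eta>2"
    and \<eta>: "filling_map G B (oc M {\<one>\<^bsub>G\<^esub>}) (gact G M) \<eta>"
    and \<phi>: "is_hom G F M (P 1) \<phi>"
    and cycle: "\<And>x. x \<in> oc M {\<one>\<^bsub>G\<^esub>} \<Longrightarrow> d 0 {\<one>\<^bsub>G\<^esub>} (\<phi> {\<one>\<^bsub>G\<^esub>} x) = 0"
  obtains K where "\<And>x. x \<in> oc M {\<one>\<^bsub>G\<^esub>} \<Longrightarrow> \<exists>\<mu>\<in>oc (P 2) {\<one>\<^bsub>G\<^esub>}.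
    d 1 {\<one>\<^bsub>G\<^esub>} \<mu> = \<phi> {\<one>\<^bsub>G\<^esub>} x \<and> fill_norm G B2 \<eta>2 \<mu> \<le> K * fill_norm G B \<eta> x"
proof -
  note P = FP2_resD[OF P]
  have "\<phi> {\<one>\<^bsub>G\<^esub>} ` oc M {\<one>\<^bsub>G\<^esub>} \<subseteq> d 1 {\<one>\<^bsub>G\<^esub>} ` oc (P 2) {\<one>\<^bsub>G\<^esub>}"
  proof (rule image_subsetI)
    fix x assume "x \<in> oc M {\<one>\<^bsub>G\<^esub>}"
    then have "\<phi> {\<one>\<^bsub>G\<^esub>} x \<in> {y \<in> oc (P 1) {\<one>\<^bsub>G\<^esub>}. d 0 {\<one>\<^bsub>G\<^esub>} y = 0}"
      using hom_closed[OF \<phi> I] cycle by blast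
    then show "\<phi> {\<one>\<^bsub>G\<^esub>} x \<in> d 1 {\<one>\<^bsub>G\<^esub>} ` oc (P 2) {\<one>\<^bsub>G\<^esub>}"
      using P(8) I by blast
  qed
  with hom_lipschitz_lift[OF G I \<phi> P(4) \<eta> \<eta>2] that show ?thesis
    by blast
qed

lemma FP2_res_homotopy_defect_cycle:
  assumes P: "FP2_res G F P d eps" and K: "K \<in> F"
    and w1: "is_hom G F (P 1) (P 1) w1" "\<forall>K\<in>F. \<forall>x\<in>oc (P 1) K. d 0 K (w1 K x) = w0 K (d 0 K x)"
    and h: "is_hom G F (P 0) (P 1) h" "\<forall>K\<in>F. \<forall>x\<in>oc (P 0) K. d 0 K (h K x) = w0 K x - x"
    and x: "x \<in> oc (P 1) K"
  shows "d 0 K ((w1 K x - x) - h K (d 0 K x)) = 0"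
proof -
  note P = FP2_resD[OF P]
  have P1: "add_subgroup (oc (P 1) K)" and d0: "additive_on (oc (P 1) K) (d 0 K)"
    using omod_add_subgroup[OF P(1) K] hom_additive[OF P(3) K] .
  have dx: "d 0 K x \<in> oc (P 0) K"
    using hom_closed[OF P(3) K x] .
  have w: "w1 K x \<in> oc (P 1) K" and hdx: "h K (d 0 K x) \<in> oc (P 1) K"
    using hom_closed[OF w1(1) K x] hom_closed[OF h(1) K dx] .
  have "d 0 K ((w1 K x - x) - h K (d 0 K x)) = (d 0 K (w1 K x) - d 0 K x) - d 0 K (h K (d 0 K x))"
    using additive_on_diff[OF P1 d0] add_subgroup_diff[OF P1] w x hdx by simp
  also have "\<dots> = 0"
    using w1(2) h(2) K x dx by simp
  finally show ?thesis .
qed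

lemma chain_endomorphism_homotopy_bound:
  assumes G: "group G" and F: "family G F" and P: "FP2_res G F P d eps"
    and \<eta>1: "filling_map G B1 (oc (P 1) {\<one>\<^bsub>G\<^esub>}) (gact G (P 1)) \<eta>1"
    and \<eta>2: "filling_map G B2 (oc (P 2) {\<one>\<^bsub>G\<^esub>}) (gact G (P 2)) \<eta>2"
    and w0: "is_hom G F (P 0) (P 0) w0" "\<forall>K\<in>F. \<forall>x\<in>oc (P 0) K. eps K (w0 K x) = eps K x"
    and w1: "is_hom G F (P 1) (P 1) w1" "\<forall>K\<in>F. \<forall>x\<in>oc (P 1) K. d 0 K (w1 K x) = w0 K (d 0 K x)"
  obtains K where "\<And>\<gamma>. \<gamma> \<in> oc (P 1) {\<one>\<^bsub>G\<^esub>} \<Longrightarrow> d 0 {\<one>\<^bsub>G\<^esub>} \<gamma> = 0 \<Longrightarrow> \<exists>\<mu>\<in>oc (P 2) {\<one>\<^bsub>G\<^esub>}.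
    d 1 {\<one>\<^bsub>G\<^esub>} \<mu> = w1 {\<one>\<^bsub>G\<^esub>} \<gamma> - \<gamma> \<and> fill_norm G B2 \<eta>2 \<mu> \<le> K * fill_norm G B1 \<eta>1 \<gamma>"
proof -
  let ?I = "{\<one>\<^bsub>G\<^esub>}"
  note P' = FP2_resD[OF P]
  have I: "?I \<in> F"
    by (rule family_trivial_subgroup[OF G F])
  obtain h where h: "is_hom G F (P 0) (P 1) h" "\<forall>K\<in>F. \<forall>x\<in>oc (P 0) K. d 0 K (h K x) = w0 K x - x"
    using FP2_res_homotopy0[OF G F P w0] by blast
  define V where "V = (\<lambda>K x. (w1 K x - x) - h K (d 0 K x))"
  have V: "is_hom G F (P 1) (P 1) V"
    unfolding V_def by (intro hom_diff[OF P'(1)] hom_comp[OF P'(3) h(1)] w1(1) hom_id)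
  obtain K where K: "\<And>x. x \<in> oc (P 1) ?I \<Longrightarrow>
      \<exists>\<mu>\<in>oc (P 2) ?I. d 1 ?I \<mu> = V ?I x \<and> fill_norm G B2 \<eta>2 \<mu> \<le> K * fill_norm G B1 \<eta>1 x"
    using cycle_valued_hom_fill_bound[OF G I P \<eta>2 \<eta>1 V] FP2_res_homotopy_defect_cycle[OF P I w1 h]
    unfolding V_def by blast
  have "h ?I 0 = 0"
    by (rule additive_on_0[OF omod_add_subgroup[OF P'(1) I] hom_additive[OF h(1) I]])
  then have "V ?I \<gamma> = w1 ?I \<gamma> - \<gamma>" if "d 0 ?I \<gamma> = 0" for \<gamma>
    using that unfolding V_def by simp
  with K that show ?thesis
    by (metis (no_types, lifting))
qed

lemma chain_map_boundary_fill_bound: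
  assumes G: "group G" and F: "family G F" and P: "FP2_res G F P d eps" and Q: "FP2_res G F Q d' eps'"
    and \<eta>2: "filling_map G B2 (oc (P 2) {\<one>\<^bsub>G\<^esub>}) (gact G (P 2)) \<eta>2"
    and \<theta>2: "filling_map G C2 (oc (Q 2) {\<one>\<^bsub>G\<^esub>}) (gact G (Q 2)) \<theta>2"
    and g0: "is_hom G F (Q 0) (P 0) g0"
    and g1: "is_hom G F (Q 1) (P 1) g1" "\<forall>K\<in>F. \<forall>x\<in>oc (Q 1) K. d 0 K (g1 K x) = g0 K (d' 0 K x)"
  obtains K where "\<And>\<nu>. \<nu> \<in> oc (Q 2) {\<one>\<^bsub>G\<^esub>} \<Longrightarrow> \<exists>\<mu>\<in>oc (P 2) {\<one>\<^bsub>G\<^esub>}.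
    d 1 {\<one>\<^bsub>G\<^esub>} \<mu> = g1 {\<one>\<^bsub>G\<^esub>} (d' 1 {\<one>\<^bsub>G\<^esub>} \<nu>) \<and> fill_norm G B2 \<eta>2 \<mu> \<le> K * fill_norm G C2 \<theta>2 \<nu>"
proof -
  let ?I = "{\<one>\<^bsub>G\<^esub>}"
  note Q' = FP2_resD[OF Q]
  have I: "?I \<in> F"
    by (rule family_trivial_subgroup[OF G F])
  have "g0 ?I 0 = 0"
    by (rule additive_on_0[OF omod_add_subgroup[OF Q'(1) I] hom_additive[OF g0 I]])
  moreover have "d' 1 ?I \<nu> \<in> {x \<in> oc (Q 1) ?I. d' 0 ?I x = 0}" if "\<nu> \<in> oc (Q 2) ?I" for \<nu>
    using that Q'(8) I by blast
  ultimately have "d 0 ?I (g1 ?I (d' 1 ?I \<nu>)) = 0" if "\<nu> \<in> oc (Q 2) ?I" for \<nu>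
    using that g1(2) I by simp
  with cycle_valued_hom_fill_bound[OF G I P \<eta>2 \<theta>2 hom_comp[OF Q'(4) g1(1)]] that show ?thesis
    by blast
qed

section \<open>Filling functions\<close>

definition fill_area :: "('a, 'z) monoid_scheme \<Rightarrow> (nat \<Rightarrow> ('a, 'm::ab_group_add) omod)
    \<Rightarrow> (nat \<Rightarrow> 'a set \<Rightarrow> 'm \<Rightarrow> 'm) \<Rightarrow> 'c set \<Rightarrow> (('a \<times> 'c \<Rightarrow> int) \<Rightarrow> 'm) \<Rightarrow> 'm \<Rightarrow> nat" where
  "fill_area G P d B2 \<eta>2 \<gamma> =
     (LEAST n. \<exists>\<mu>\<in>oc (P 2) {\<one>\<^bsub>G\<^esub>}. d 1 {\<one>\<^bsub>G\<^esub>} \<mu> = \<gamma> \<and> fill_norm G B2 \<eta>2 \<mu> = n)"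

lemma FV_eq_Sup_fill_area:
  "FV G P d B1 \<eta>1 B2 \<eta>2 k = (SUP \<gamma>\<in>{\<gamma>\<in>oc (P 1) {\<one>\<^bsub>G\<^esub>}. d 0 {\<one>\<^bsub>G\<^esub>} \<gamma> = 0 \<and> fill_norm G B1 \<eta>1 \<gamma> \<le> k}.
      enat (fill_area G P d B2 \<eta>2 \<gamma>))"
  unfolding FV_def fill_area_def ..

lemma fill_area_le:
  "\<mu> \<in> oc (P 2) {\<one>\<^bsub>G\<^esub>} \<Longrightarrow> d 1 {\<one>\<^bsub>G\<^esub>} \<mu> = \<gamma> \<Longrightarrow> fill_area G P d B2 \<eta>2 \<gamma> \<le> fill_norm G B2 \<eta>2 \<mu>"
  unfolding fill_area_def by (rule Least_le) blast

lemma fill_area_attained: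
  assumes "\<gamma> \<in> d 1 {\<one>\<^bsub>G\<^esub>} ` oc (P 2) {\<one>\<^bsub>G\<^esub>}"
  obtains \<mu> where "\<mu> \<in> oc (P 2) {\<one>\<^bsub>G\<^esub>}" "d 1 {\<one>\<^bsub>G\<^esub>} \<mu> = \<gamma>"
    "fill_norm G B2 \<eta>2 \<mu> = fill_area G P d B2 \<eta>2 \<gamma>"
proof -
  obtain \<mu>0 where \<mu>0: "\<mu>0 \<in> oc (P 2) {\<one>\<^bsub>G\<^esub>}" "d 1 {\<one>\<^bsub>G\<^esub>} \<mu>0 = \<gamma>"
    using assms by blast
  have "\<exists>\<mu>\<in>oc (P 2) {\<one>\<^bsub>G\<^esub>}. d 1 {\<one>\<^bsub>G\<^esub>} \<mu> = \<gamma> \<and> fill_norm G B2 \<eta>2 \<mu> = fill_area G P d B2 \<eta>2 \<gamma>"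
    unfolding fill_area_def by (rule LeastI_ex) (use \<mu>0 in blast)
  with that show ?thesis
    by blast
qed

lemma fill_area_transfer:
  fixes G :: "('a, 'z) monoid_scheme"
    and P :: "nat \<Rightarrow> ('a, 'm::ab_group_add) omod" and Q :: "nat \<Rightarrow> ('a, 'n::ab_group_add) omod"
  defines "I \<equiv> {\<one>\<^bsub>G\<^esub>}"
  assumes G: "group G" and \<eta>2: "filling_map G B2 (oc (P 2) I) (gact G (P 2)) \<eta>2"
    and d1: "additive_on (oc (P 2) I) (d 1 I)"
    and y: "y \<in> d' 1 I ` oc (Q 2) I"
    and g: "\<And>\<nu>. \<nu> \<in> oc (Q 2) I \<Longrightarrow>
      \<exists>\<mu>\<in>oc (P 2) I. d 1 I \<mu> = g (d' 1 I \<nu>) \<and> fill_norm G B2 \<eta>2 \<mu> \<le> K2 * fill_norm G C2 \<theta>2 \<nu>"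
    and \<mu>2: "\<mu>2 \<in> oc (P 2) I" "d 1 I \<mu>2 = g y - \<gamma>"
  shows "fill_area G P d B2 \<eta>2 \<gamma> \<le> K2 * fill_area G Q d' C2 \<theta>2 y + fill_norm G B2 \<eta>2 \<mu>2"
proof -
  interpret P2: filling_norm G B2 "oc (P 2) I" "gact G (P 2)" \<eta>2
    using G \<eta>2 by (intro filling_norm.intro filling_norm_axioms.intro)
  obtain \<nu> where \<nu>: "\<nu> \<in> oc (Q 2) I" "d' 1 I \<nu> = y" "fill_norm G C2 \<theta>2 \<nu> = fill_area G Q d' C2 \<theta>2 y"
    using y fill_area_attained unfolding I_def by metis
  obtain \<mu>1 where \<mu>1: "\<mu>1 \<in> oc (P 2) I" "d 1 I \<mu>1 = g y"
    "fill_norm G B2 \<eta>2 \<mu>1 \<le> K2 * fill_area G Q d' C2 \<theta>2 y"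
    using g[OF \<nu>(1)] \<nu> by auto
  have "d 1 I (\<mu>1 - \<mu>2) = \<gamma>"
    using additive_on_diff[OF P2.add_subgroup d1 \<mu>1(1) \<mu>2(1)] \<mu>1(2) \<mu>2(2) by simp
  then have "fill_area G P d B2 \<eta>2 \<gamma> \<le> fill_norm G B2 \<eta>2 (\<mu>1 - \<mu>2)"
    using fill_area_le P2.diff_in[OF \<mu>1(1) \<mu>2(1)] unfolding I_def by metis
  also have "\<dots> \<le> K2 * fill_area G Q d' C2 \<theta>2 y + fill_norm G B2 \<eta>2 \<mu>2"
    using P2.fill_norm_diff_le[OF \<mu>1(1) \<mu>2(1)] \<mu>1(3) by linarith
  finally show ?thesis .
qed

lemma FV_preceq_by_comparison:
  fixes G :: "('a, 'z) monoid_scheme"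
    and P :: "nat \<Rightarrow> ('a, 'm::ab_group_add) omod" and Q :: "nat \<Rightarrow> ('a, 'n::ab_group_add) omod"
    and f :: "'m \<Rightarrow> 'n" and g :: "'n \<Rightarrow> 'm"
  defines "I \<equiv> {\<one>\<^bsub>G\<^esub>}"
  assumes G: "group G" and \<eta>2: "filling_map G B2 (oc (P 2) I) (gact G (P 2)) \<eta>2"
    and d1: "additive_on (oc (P 2) I) (d 1 I)"
    and Q_exact: "\<And>y. y \<in> oc (Q 1) I \<Longrightarrow> d' 0 I y = 0 \<Longrightarrow> y \<in> d' 1 I ` oc (Q 2) I"
    and f: "\<And>\<gamma>. \<gamma> \<in> oc (P 1) I \<Longrightarrow> d 0 I \<gamma> = 0 \<Longrightarrow>
      f \<gamma> \<in> oc (Q 1) I \<and> d' 0 I (f \<gamma>) = 0 \<and> fill_norm G C1 \<theta>1 (f \<gamma>) \<le> K1 * fill_norm G B1 \<eta>1 \<gamma>"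
    and g: "\<And>\<nu>. \<nu> \<in> oc (Q 2) I \<Longrightarrow>
      \<exists>\<mu>\<in>oc (P 2) I. d 1 I \<mu> = g (d' 1 I \<nu>) \<and> fill_norm G B2 \<eta>2 \<mu> \<le> K2 * fill_norm G C2 \<theta>2 \<nu>"
    and homotopy: "\<And>\<gamma>. \<gamma> \<in> oc (P 1) I \<Longrightarrow> d 0 I \<gamma> = 0 \<Longrightarrow>
      \<exists>\<mu>\<in>oc (P 2) I. d 1 I \<mu> = g (f \<gamma>) - \<gamma> \<and> fill_norm G B2 \<eta>2 \<mu> \<le> K3 * fill_norm G B1 \<eta>1 \<gamma>"
  shows "preceq (FV G P d B1 \<eta>1 B2 \<eta>2) (FV G Q d' C1 \<theta>1 C2 \<theta>2)"
proof -
  define C where "C = K1 + K2 + K3 + 1"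
  have "enat (fill_area G P d B2 \<eta>2 \<gamma>) \<le> enat C * FV G Q d' C1 \<theta>1 C2 \<theta>2 (C * n + C) + enat (C * n + C)"
    if \<gamma>: "\<gamma> \<in> oc (P 1) I" "d 0 I \<gamma> = 0" "fill_norm G B1 \<eta>1 \<gamma> \<le> n" for \<gamma> n
  proof -
    let ?m = "fill_area G Q d' C2 \<theta>2 (f \<gamma>)"
    have "K1 * fill_norm G B1 \<eta>1 \<gamma> \<le> C * n + C"
      using \<gamma>(3) mult_le_mono[of K1 C] unfolding C_def by fastforce
    then have f\<gamma>: "f \<gamma> \<in> oc (Q 1) I" "d' 0 I (f \<gamma>) = 0" "fill_norm G C1 \<theta>1 (f \<gamma>) \<le> C * n + C"
      using f[OF \<gamma>(1,2)] by auto
    have m: "enat ?m \<le> FV G Q d' C1 \<theta>1 C2 \<theta>2 (C * n + C)"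
      unfolding FV_eq_Sup_fill_area[of G Q] by (rule SUP_upper) (use f\<gamma> in \<open>simp add: I_def\<close>)
    obtain \<mu>2 where \<mu>2: "\<mu>2 \<in> oc (P 2) I" "d 1 I \<mu>2 = g (f \<gamma>) - \<gamma>"
      "fill_norm G B2 \<eta>2 \<mu>2 \<le> K3 * fill_norm G B1 \<eta>1 \<gamma>"
      using homotopy[OF \<gamma>(1,2)] by blast
    have "fill_area G P d B2 \<eta>2 \<gamma> \<le> K2 * ?m + K3 * n"
      using fill_area_transfer[where G = G and P = P and Q = Q and d = d and d' = d' and y = "f \<gamma>" and g = g, OF G \<eta>2[unfolded I_def] d1[unfolded I_def]
          Q_exact[OF f\<gamma>(1,2), unfolded I_def] g[unfolded I_def] \<mu>2(1,2)[unfolded I_def]]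
        \<mu>2(3) mult_le_mono2[OF \<gamma>(3), of K3]
      by linarith
    also have "\<dots> \<le> C * ?m + (C * n + C)"
      using mult_le_mono1[of K2 C ?m] mult_le_mono1[of K3 C n] unfolding C_def by linarith
    finally have "enat (fill_area G P d B2 \<eta>2 \<gamma>) \<le> enat C * enat ?m + enat (C * n + C)"
      by simp
    also have "\<dots> \<le> enat C * FV G Q d' C1 \<theta>1 C2 \<theta>2 (C * n + C) + enat (C * n + C)"
      using m by (intro add_right_mono mult_left_mono) simp_all
    finally show ?thesis .
  qed
  then show ?thesis
    unfolding preceq_def FV_eq_Sup_fill_area[of G P]
    by (intro exI[of _ C] conjI allI SUP_least) (auto simp: C_def I_def)
qed

lemma FV_preceq:
  assumes G: "group G" and F: "family G F"
    and P: "FP2_res G F P d eps"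
    and \<eta>1: "filling_map G B1 (oc (P 1) {\<one>\<^bsub>G\<^esub>}) (gact G (P 1)) \<eta>1"
    and \<eta>2: "filling_map G B2 (oc (P 2) {\<one>\<^bsub>G\<^esub>}) (gact G (P 2)) \<eta>2"
    and Q: "FP2_res G F Q d' eps'"
    and \<theta>1: "filling_map G C1 (oc (Q 1) {\<one>\<^bsub>G\<^esub>}) (gact G (Q 1)) \<theta>1"
    and \<theta>2: "filling_map G C2 (oc (Q 2) {\<one>\<^bsub>G\<^esub>}) (gact G (Q 2)) \<theta>2"
  shows "preceq (FV G P d B1 \<eta>1 B2 \<eta>2) (FV G Q d' C1 \<theta>1 C2 \<theta>2)"
proof -
  let ?I = "{\<one>\<^bsub>G\<^esub>}"
  have I: "?I \<in> F"
    by (rule family_trivial_subgroup[OF G F])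
  note P' = FP2_resD[OF P] and Q' = FP2_resD[OF Q]
  obtain f0 f1 where f0: "is_hom G F (P 0) (Q 0) f0" "\<forall>K\<in>F. \<forall>x\<in>oc (P 0) K. eps' K (f0 K x) = eps K x"
    and f1: "is_hom G F (P 1) (Q 1) f1" "\<forall>K\<in>F. \<forall>x\<in>oc (P 1) K. d' 0 K (f1 K x) = f0 K (d 0 K x)"
    using FP2_res_comparison_maps[OF G F P Q] by blast
  obtain g0 g1 where g0: "is_hom G F (Q 0) (P 0) g0" "\<forall>K\<in>F. \<forall>x\<in>oc (Q 0) K. eps K (g0 K x) = eps' K x"
    and g1: "is_hom G F (Q 1) (P 1) g1" "\<forall>K\<in>F. \<forall>x\<in>oc (Q 1) K. d 0 K (g1 K x) = g0 K (d' 0 K x)"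
    using FP2_res_comparison_maps[OF G F Q P] by blast
  have f0_0: "f0 ?I 0 = 0"
    using additive_on_0[OF omod_add_subgroup[OF P'(1) I] hom_additive[OF f0(1) I]] .
  obtain K1 where K1: "\<And>x. x \<in> oc (P 1) ?I \<Longrightarrow> fill_norm G C1 \<theta>1 (f1 ?I x) \<le> K1 * fill_norm G B1 \<eta>1 x"
    using hom_fill_norm_bound[OF G I f1(1) \<eta>1 \<theta>1] by blast
  obtain K2 where K2: "\<And>\<nu>. \<nu> \<in> oc (Q 2) ?I \<Longrightarrow> \<exists>\<mu>\<in>oc (P 2) ?I.
      d 1 ?I \<mu> = g1 ?I (d' 1 ?I \<nu>) \<and> fill_norm G B2 \<eta>2 \<mu> \<le> K2 * fill_norm G C2 \<theta>2 \<nu>"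
    using chain_map_boundary_fill_bound[OF G F P Q \<eta>2 \<theta>2 g0(1) g1] by blast
  have "\<forall>K\<in>F. \<forall>x\<in>oc (P 0) K. eps K (g0 K (f0 K x)) = eps K x"
    using f0 g0 hom_closed[OF f0(1)] by simp
  moreover have "\<forall>K\<in>F. \<forall>x\<in>oc (P 1) K. d 0 K (g1 K (f1 K x)) = g0 K (f0 K (d 0 K x))"
    using f1 g1 hom_closed[OF f1(1)] by simp
  ultimately obtain K3 where K3: "\<And>\<gamma>. \<gamma> \<in> oc (P 1) ?I \<Longrightarrow> d 0 ?I \<gamma> = 0 \<Longrightarrow> \<exists>\<mu>\<in>oc (P 2) ?I.
      d 1 ?I \<mu> = g1 ?I (f1 ?I \<gamma>) - \<gamma> \<and> fill_norm G B2 \<eta>2 \<mu> \<le> K3 * fill_norm G B1 \<eta>1 \<gamma>"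
    using chain_endomorphism_homotopy_bound[OF G F P \<eta>1 \<eta>2 hom_comp[OF f0(1) g0(1)] _
        hom_comp[OF f1(1) g1(1)]] by blast
  show ?thesis
  proof (rule FV_preceq_by_comparison[where f = "f1 ?I" and g = "g1 ?I"])
    show "group G" "filling_map G B2 (oc (P 2) ?I) (gact G (P 2)) \<eta>2"
      "additive_on (oc (P 2) ?I) (d 1 ?I)"
      using G \<eta>2 hom_additive[OF P'(4) I] by auto
    show "y \<in> d' 1 ?I ` oc (Q 2) ?I" if "y \<in> oc (Q 1) ?I" "d' 0 ?I y = 0" for y
      using that Q'(8) I by blast
    show "f1 ?I \<gamma> \<in> oc (Q 1) ?I \<and> d' 0 ?I (f1 ?I \<gamma>) = 0
        \<and> fill_norm G C1 \<theta>1 (f1 ?I \<gamma>) \<le> K1 * fill_norm G B1 \<eta>1 \<gamma>"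
      if "\<gamma> \<in> oc (P 1) ?I" "d 0 ?I \<gamma> = 0" for \<gamma>
      using that hom_closed[OF f1(1) I] f1(2) I f0_0 K1 by simp
  qed (fact K2 K3)+
qed

theorem mainTheorem9:
  fixes G :: "('a, 'z) monoid_scheme" and F :: "'a set set"
    and P :: "nat \<Rightarrow> ('a, 'm::ab_group_add) omod" and d :: "nat \<Rightarrow> 'a set \<Rightarrow> 'm \<Rightarrow> 'm"
    and eps :: "'a set \<Rightarrow> 'm \<Rightarrow> ('a set \<Rightarrow> int)"
    and B1 :: "'b1 set" and \<eta>1 :: "('a \<times> 'b1 \<Rightarrow> int) \<Rightarrow> 'm"
    and B2 :: "'b2 set" and \<eta>2 :: "('a \<times> 'b2 \<Rightarrow> int) \<Rightarrow> 'm"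
    and Q :: "nat \<Rightarrow> ('a, 'n::ab_group_add) omod" and d' :: "nat \<Rightarrow> 'a set \<Rightarrow> 'n \<Rightarrow> 'n"
    and eps' :: "'a set \<Rightarrow> 'n \<Rightarrow> ('a set \<Rightarrow> int)"
    and C1 :: "'c1 set" and \<theta>1 :: "('a \<times> 'c1 \<Rightarrow> int) \<Rightarrow> 'n"
    and C2 :: "'c2 set" and \<theta>2 :: "('a \<times> 'c2 \<Rightarrow> int) \<Rightarrow> 'n"
  assumes "group G" and "family G F"
    and "FP2_res G F P d eps"
    and "filling_map G B1 (oc (P 1) {\<one>\<^bsub>G\<^esub>}) (gact G (P 1)) \<eta>1"
    and "filling_map G B2 (oc (P 2) {\<one>\<^bsub>G\<^esub>}) (gact G (P 2)) \<eta>2"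
    and "FP2_res G F Q d' eps'"
    and "filling_map G C1 (oc (Q 1) {\<one>\<^bsub>G\<^esub>}) (gact G (Q 1)) \<theta>1"
    and "filling_map G C2 (oc (Q 2) {\<one>\<^bsub>G\<^esub>}) (gact G (Q 2)) \<theta>2"
  shows "growth_equiv (FV G P d B1 \<eta>1 B2 \<eta>2) (FV G Q d' C1 \<theta>1 C2 \<theta>2)"
  unfolding growth_equiv_def
  using FV_preceq[OF assms] FV_preceq[OF assms(1,2,6,7,8,3,4,5)] by blast

end
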